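(* Let $f : 2^V \to \mathbb{Z}_{\ge 0}$ be a connectivity function and $(T,L)$ a branch decomposition of $f$ of width $k$ having $h \ge 1$ edges of width $k$. Let $uv$ be an edge of $T$ with $f(uv)=k$, inducing the bipartition $(W, V\setminus W)$ where $W$ is the set of elements of $V$ mapped to leaves on $u$'s side. If there exists a $W$-improvement, then there exists a $W$-improvement $(C_1,C_2,C_3)$ such that the refinement of $(T,L)$ with $(uv,C_1,C_2,C_3)$ has width at most $k$ and has fewer than $h$ edges of width $k$.
   Context: A connectivity function $f:2^V\to\mathbb{Z}_{\ge0}$ ($V$ finite) satisfies $f(\emptyset)=0$, $f(X)=f(V\setminus X)$, and $f(X\cup Y)+f(X\cap Y)\le f(X)+f(Y)$. A branch decomposition of $f$ is $(T,L)$ with $T$ a tree whose nodes have degree 1 or 3 and $L$ a bijection from $V$ to the leaves of $T$; an edge $e$ of $T$ induces via $T-e$ a bipartition $(X,V\setminus X)$ and has width $f(e)=f(X)$; the width of $(T,L)$ is the maximum edge width. For $W\subseteq V$, a $W$-improvement is a tripartition $(C_1,C_2,C_3)$ of $V$ (pairwise disjoint, possibly empty, union $V$) such that for each $i$: $f(C_i)<f(W)/2$, $f(C_i\cap W)<f(W)$ and $f(C_i\cap (V\setminus W))<f(W)$. A partial branch decomposition is a pair $(T,L)$ with $T$ as before and $L$ an injection from a subset of $V$ into the leaves. The refinement of $(T,L)$ with $(uv,C_1,C_2,C_3)$ is defined as follows: for each $i\in\{1,2,3\}$ take a copy $T_i$ of $T$ with labeling $L$ restricted to $C_i$, let $u_iv_i$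 be the copy of $uv$ in $T_i$, and subdivide $u_iv_i$ by a new node $w_i$; take the disjoint union of $T_1,T_2,T_3$ and add a new node $t$ adjacent to $w_1,w_2,w_3$; finally, repeatedly delete degree-1 nodes that are not labeled and suppress degree-2 nodes (a degree-2 node with neighbors $a,b$ is deleted and replaced by the edge $ab$). *)

theory Defs
  imports Main
begin

definition connectivity_function :: "'v set \<Rightarrow> ('v set \<Rightarrow> nat) \<Rightarrow> bool" where
  "connectivity_function V f \<longleftrightarrow> finite V \<and> f {} = 0
     \<and> (\<forall>X. X \<subseteq> V \<longrightarrow> f X = f (V - X))
     \<and> (\<forall>X Y. X \<subseteq> V \<longrightarrow> Y \<subseteq> V \<longrightarrow> f (X \<union> Y) + f (X \<inter> Y) \<le> f X + f Y)"

definition graph :: "'n set \<Rightarrow> 'n set set \<Rightarrow> bool" where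
  "graph N E \<longleftrightarrow> finite N \<and> (\<forall>e\<in>E. e \<subseteq> N \<and> card e = 2)"

definition adj :: "'n set set \<Rightarrow> ('n \<times> 'n) set" where
  "adj E = {(a, b). {a, b} \<in> E}"

definition reach :: "'n set set \<Rightarrow> 'n \<Rightarrow> 'n \<Rightarrow> bool" where
  "reach E a b \<longleftrightarrow> (a, b) \<in> (adj E)\<^sup>*"

definition deg :: "'n set set \<Rightarrow> 'n \<Rightarrow> nat" where
  "deg E x = card {e \<in> E. x \<in> e}"

text \<open>A tree: nonempty, connected, and acyclic (every edge is a bridge, i.e. removing it
  disconnects its endpoints).\<close>
definition tree :: "'n set \<Rightarrow> 'n set set \<Rightarrow> bool" where
  "tree N E \<longleftrightarrow> graph N E \<and> N \<noteq> {}
     \<and> (\<forall>a\<in>N. \<forall>b\<in>N. reach E a b)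
     \<and> (\<forall>a b. {a, b} \<in> E \<longrightarrow> \<not> reach (E - {{a, b}}) a b)"

definition leaves :: "'n set \<Rightarrow> 'n set set \<Rightarrow> 'n set" where
  "leaves N E = {x \<in> N. deg E x = 1}"

definition branch_decomposition ::
  "'v set \<Rightarrow> 'n set \<Rightarrow> 'n set set \<Rightarrow> ('v \<Rightarrow> 'n) \<Rightarrow> bool" where
  "branch_decomposition V N E L \<longleftrightarrow> tree N E
     \<and> (\<forall>x\<in>N. deg E x = 1 \<or> deg E x = 3)
     \<and> bij_betw L V (leaves N E)"

definition side :: "'v set \<Rightarrow> 'n set set \<Rightarrow> ('v \<Rightarrow> 'n) \<Rightarrow> 'n \<Rightarrow> 'n \<Rightarrow> 'v set" where
  "side V E L a b = {x \<in> V. reach (E - {{a, b}}) a (L x)}"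

definition edge_widths ::
  "'v set \<Rightarrow> ('v set \<Rightarrow> nat) \<Rightarrow> 'n set set \<Rightarrow> ('v \<Rightarrow> 'n) \<Rightarrow> nat set" where
  "edge_widths V f E L = {f (side V E L a b) | a b. {a, b} \<in> E}"

definition dwidth :: "'v set \<Rightarrow> ('v set \<Rightarrow> nat) \<Rightarrow> 'n set set \<Rightarrow> ('v \<Rightarrow> 'n) \<Rightarrow> nat" where
  "dwidth V f E L = Max (edge_widths V f E L)"

definition n_width_edges ::
  "'v set \<Rightarrow> ('v set \<Rightarrow> nat) \<Rightarrow> 'n set set \<Rightarrow> ('v \<Rightarrow> 'n) \<Rightarrow> nat \<Rightarrow> nat" where
  "n_width_edges V f E L k = card {e \<in> E. \<exists>a b. e = {a, b} \<and> f (side V E L a b) = k}"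

definition improvement ::
  "'v set \<Rightarrow> ('v set \<Rightarrow> nat) \<Rightarrow> 'v set \<Rightarrow> 'v set \<Rightarrow> 'v set \<Rightarrow> 'v set \<Rightarrow> bool" where
  "improvement V f W C1 C2 C3 \<longleftrightarrow>
     C1 \<inter> C2 = {} \<and> C1 \<inter> C3 = {} \<and> C2 \<inter> C3 = {} \<and> C1 \<union> C2 \<union> C3 = V
     \<and> (\<forall>C\<in>{C1, C2, C3}. 2 * f C < f W \<and> f (C \<inter> W) < f W \<and> f (C \<inter> (V - W)) < f W)"

text \<open>Nodes of the refined tree: copies \<open>Cp i n\<close> of the nodes of T (i = 1,2,3),
  the subdivision nodes \<open>Sub i\<close> (the \<open>w_i\<close>) and the new centre \<open>Ctr\<close> (the node t).\<close>
datatype 'n rnode = Cp nat 'n | Sub nat | Ctr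

definition ref_nodes :: "'n set \<Rightarrow> 'n rnode set" where
  "ref_nodes N = {Cp i x | i x. i \<in> {1, 2, 3} \<and> x \<in> N} \<union> {Sub 1, Sub 2, Sub 3, Ctr}"

definition ref_edges :: "'n set set \<Rightarrow> 'n \<Rightarrow> 'n \<Rightarrow> 'n rnode set set" where
  "ref_edges E u v =
     {{Cp i a, Cp i b} | i a b. i \<in> {1, 2, 3} \<and> {a, b} \<in> E - {{u, v}}}
     \<union> (\<Union>i\<in>{1, 2, 3}. {{Cp i u, Sub i}, {Sub i, Cp i v}, {Sub i, Ctr}})"

text \<open>Labeling of the disjoint union: x in \<open>C_i\<close> goes to the copy in \<open>T_i\<close> of its leaf;
  leaves of \<open>T_i\<close> holding elements outside \<open>C_i\<close> are unlabeled.\<close>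
definition ref_label ::
  "('v \<Rightarrow> 'n) \<Rightarrow> 'v set \<Rightarrow> 'v set \<Rightarrow> 'v \<Rightarrow> 'n rnode" where
  "ref_label L C1 C2 x = (if x \<in> C1 then Cp 1 (L x) else if x \<in> C2 then Cp 2 (L x) else Cp 3 (L x))"

inductive cleanup_step :: "'m set \<Rightarrow> 'm set \<times> 'm set set \<Rightarrow> 'm set \<times> 'm set set \<Rightarrow> bool"
  for Lab where
  delete: "x \<in> N \<Longrightarrow> deg E x = 1 \<Longrightarrow> x \<notin> Lab \<Longrightarrow>
     cleanup_step Lab (N, E) (N - {x}, {e \<in> E. x \<notin> e})"
| suppress: "x \<in> N \<Longrightarrow> deg E x = 2 \<Longrightarrow> {x, a} \<in> E \<Longrightarrow> {x, b} \<in> E \<Longrightarrow> a \<noteq> b \<Longrightarrow>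
     cleanup_step Lab (N, E) (N - {x}, {e \<in> E. x \<notin> e} \<union> {{a, b}})"

definition is_refinement ::
  "'v set \<Rightarrow> 'n set \<Rightarrow> 'n set set \<Rightarrow> ('v \<Rightarrow> 'n) \<Rightarrow> 'n \<Rightarrow> 'n \<Rightarrow> 'v set \<Rightarrow> 'v set \<Rightarrow> 'v set
     \<Rightarrow> 'n rnode set \<Rightarrow> 'n rnode set set \<Rightarrow> bool" where
  "is_refinement V N E L u v C1 C2 C3 N' E' \<longleftrightarrow>
     (let Lab = ref_label L C1 C2 ` V in
       (cleanup_step Lab)\<^sup>*\<^sup>* (ref_nodes N, ref_edges E u v) (N', E')
       \<and> (\<nexists>s. cleanup_step Lab (N', E') s))"

end

theory Submission
  imports Defs
begin

text \<open>Choose the improvement (C1, C2, C3) minimising f C1 + f C2 + f C3. Uncrossing against this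
  minimality gives f (X \<inter> Ci) \<le> f X for every X contained in W or in its complement.
  Before cleanup, the refined tree has two kinds of edges. The edges of the new star at t and the
  two halves of each subdivided copy of uv display Ci, Ci \<inter> W or Ci - W, of width below k by
  the definition of an improvement. The copy in T_i of an edge ab \<noteq> uv of T displays Ci \<inter> X,
  where X is the side of ab away from u and lies on one side of W, so its width is at most f X \<le> k.
  If two copies i \<noteq> j of ab both had width k, then f X \<le> f (X \<inter> Ci) and f X \<le> f (X \<inter> Cj)
  with 2 f Ci, 2 f Cj < k would force f X < k by submodularity. Hence the edges of width k inject into
  those of T other than uv. Finally, deleting an unlabelled leaf leaves the sides of the other edges
  unchanged, and suppressing a node of degree 2 merges its two edges into one with the side of one
  of them, so the cleanup raises neither the width nor the number of edges of width k.\<close>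

section \<open>Reachability\<close>

lemma adj_iff [simp]: "(a, b) \<in> adj E \<longleftrightarrow> {a, b} \<in> E"
  by (simp add: adj_def)

lemma reach_refl [simp]: "reach E a a"
  by (simp add: reach_def)

lemma reach_sym: "reach E a b \<Longrightarrow> reach E b a"
proof -
  have "sym (adj E)"
    by (rule symI) (simp add: insert_commute)
  then show "reach E a b \<Longrightarrow> reach E b a"
    unfolding reach_def by (metis sym_rtrancl symD)
qed

lemma reach_trans: "reach E a b \<Longrightarrow> reach E b c \<Longrightarrow> reach E a c"
  unfolding reach_def by (rule rtrancl_trans)

lemma reach_edge: "{a, b} \<in> E \<Longrightarrow> reach E a b"
  unfolding reach_def by (rule r_into_rtrancl) simp

lemma reach_step: "reach E a b \<Longrightarrow> {b, c} \<in> E \<Longrightarrow> reach E a c"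
  using reach_trans reach_edge by metis

lemma reach_induct [consumes 1, case_names refl step]:
  assumes "reach E a b" "P a"
    and "\<And>y z. reach E a y \<Longrightarrow> {y, z} \<in> E \<Longrightarrow> P y \<Longrightarrow> P z"
  shows "P b"
  using assms(1) unfolding reach_def
proof (induction rule: rtrancl_induct)
  case base
  show ?case by (rule assms(2))
next
  case (step y z)
  then show ?case using assms(3)[of y z] by (simp add: reach_def)
qed

lemma reach_closed:
  assumes "reach E a b" "a \<in> S" "\<And>y z. {y, z} \<in> E \<Longrightarrow> y \<in> S \<Longrightarrow> z \<in> S"
  shows "b \<in> S"
  using assms(1) by (induction rule: reach_induct) (use assms in auto)

lemma reach_map:
  assumes "reach E a b"
    and "\<And>y z. reach E a y \<Longrightarrow> {y, z} \<in> E \<Longrightarrow> reach G (g y) (g z)"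
  shows "reach G (g a) (g b)"
  using assms(1)
proof (induction rule: reach_induct)
  case refl
  show ?case by simp
next
  case (step y z)
  show ?case using reach_trans[OF step.IH assms(2)[OF step.hyps]] .
qed

lemma reach_subst_edges:
  assumes "reach E a b" "\<And>y z. {y, z} \<in> E \<Longrightarrow> reach G y z"
  shows "reach G a b"
  by (rule reach_map[where g = id, simplified, OF assms(1)]) (rule assms(2))

lemma reach_mono:
  assumes "reach E a b" "E \<subseteq> G"
  shows "reach G a b"
  using assms(1) by (rule reach_subst_edges) (use assms(2) in \<open>auto intro: reach_edge\<close>)

lemma reach_insert_loop:
  assumes "reach (insert {y} G) p q"
  shows "reach G p q"
proof -
  have "reach G a b" if "{a, b} \<in> insert {y} G" for a b
    using that reach_edge by (cases "{a, b} = {y}") auto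
  then show ?thesis
    by (rule reach_subst_edges[OF assms])
qed

lemma reach_bridge_cases:
  "reach E a z \<Longrightarrow> reach (E - {{a, b}}) a z \<or> reach (E - {{a, b}}) b z"
proof (induction rule: reach_induct)
  case refl
  show ?case by simp
next
  case (step y z)
  show ?case
  proof (cases "{y, z} = {a, b}")
    case True
    then show ?thesis by (auto simp: doubleton_eq_iff)
  next
    case False
    with step have "{y, z} \<in> E - {{a, b}}" by simp
    with step.IH show ?thesis using reach_step by metis
  qed
qed

lemma bridge_sides_disjoint:
  "\<not> reach (E - {{a, b}}) a b \<Longrightarrow> reach (E - {{a, b}}) a z \<Longrightarrow> \<not> reach (E - {{a, b}}) b z"
  using reach_sym reach_trans by metis

lemma reach_suppress:
  assumes x: "\<forall>e\<in>G. x \<in> e \<longrightarrow> e = {x, a} \<or> e = {x, b}" "a \<noteq> x" "b \<noteq> x"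
    and "p \<noteq> x" "q \<noteq> x" "reach G p q"
  shows "reach ({e\<in>G. x \<notin> e} \<union> {{a, b}}) p q"
proof -
  let ?G = "{e\<in>G. x \<notin> e} \<union> {{a, b}}"
  have pab: "reach ?G p a \<longleftrightarrow> reach ?G p b" for p
  proof -
    have ab: "reach ?G a b"
      by (rule reach_edge) simp
    show ?thesis
      using reach_trans[OF _ ab, of p] reach_trans[OF _ reach_sym[OF ab], of p] by blast
  qed
  \<comment> \<open>a walk that reaches x is rerouted to a, which the new edge joins to b\<close>
  have "if z = x then reach ?G p a else reach ?G p z" if "reach G p z" for z
    using that
  proof (induction rule: reach_induct)
    case refl
    then show ?case using \<open>p \<noteq> x\<close> by simp
  next
    case (step y z)
    show ?case
    proof (cases "y = x \<or> z = x")
      case True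
      with step.hyps(2) x have "y = x \<and> (z = a \<or> z = b) \<or> z = x \<and> (y = a \<or> y = b)"
        by (auto simp: doubleton_eq_iff)
      with step.IH x(2,3) pab[of p] show ?thesis by auto
    next
      case False
      with step.hyps(2) have "{y, z} \<in> ?G" by auto
      moreover have "reach ?G p y" using step.IH False by simp
      ultimately show ?thesis using False reach_step[of ?G p y z] by simp
    qed
  qed
  from this[OF assms(6)] \<open>q \<noteq> x\<close> show ?thesis by simp
qed

lemma reach_unsuppress:
  assumes "{x, a} \<in> G" "{x, b} \<in> G" "reach ({e\<in>G. x \<notin> e} \<union> {{a, b}}) p q"
  shows "reach G p q"
proof -
  have "reach G a b"
    using assms(1,2) by (metis reach_edge reach_sym reach_trans)
  then have "reach G y z" if "{y, z} \<in> {e\<in>G. x \<notin> e} \<union> {{a, b}}" for y z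
    using that reach_sym[of G a b] reach_edge[of y z G] by (auto simp: doubleton_eq_iff)
  then show ?thesis
    by (rule reach_subst_edges[OF assms(3)])
qed

lemma reach_remove_pendant_iff:
  assumes "\<forall>e\<in>G. x \<in> e \<longrightarrow> e = {x, y}" "y \<noteq> x" "p \<noteq> x" "q \<noteq> x"
  shows "reach {e\<in>G. x \<notin> e} p q \<longleftrightarrow> reach G p q"
proof
  assume "reach {e\<in>G. x \<notin> e} p q"
  then show "reach G p q" by (rule reach_mono) auto
next
  assume "reach G p q"
  then have "reach ({e\<in>G. x \<notin> e} \<union> {{y, y}}) p q"
    using reach_suppress[of G x y y] assms by simp
  then show "reach {e\<in>G. x \<notin> e} p q"
    by (simp add: reach_insert_loop)
qed


section \<open>Cleanup steps\<close>

text \<open>The invariant of the cleanup. For p \<noteq> q, the connected labelled nodes p and q keep the edge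
  set nonempty, so that the maximum defining the width ranges over a nonempty set.\<close>

definition labelled_forest :: "'m set \<Rightarrow> 'm \<Rightarrow> 'm \<Rightarrow> 'm set set \<Rightarrow> bool" where
  "labelled_forest Lab p q E \<longleftrightarrow> finite E \<and> (\<forall>e\<in>E. \<exists>c d. c \<noteq> d \<and> e = {c, d})
     \<and> (\<forall>c d. {c, d} \<in> E \<longrightarrow> \<not> reach (E - {{c, d}}) c d)
     \<and> (\<forall>z\<in>Lab. \<forall>e1\<in>E. \<forall>e2\<in>E. z \<in> e1 \<longrightarrow> z \<in> e2 \<longrightarrow> e1 = e2)
     \<and> reach E p q \<and> p \<in> Lab \<and> q \<in> Lab"

lemma labelled_forestI:
  assumes "finite E" "\<And>e. e \<in> E \<Longrightarrow> \<exists>c d. c \<noteq> d \<and> e = {c, d}"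
    and "\<And>c d. {c, d} \<in> E \<Longrightarrow> \<not> reach (E - {{c, d}}) c d"
    and "\<And>z e1 e2. z \<in> Lab \<Longrightarrow> e1 \<in> E \<Longrightarrow> e2 \<in> E \<Longrightarrow> z \<in> e1 \<Longrightarrow> z \<in> e2 \<Longrightarrow> e1 = e2"
    and "reach E p q" "p \<in> Lab" "q \<in> Lab"
  shows "labelled_forest Lab p q E"
  using assms unfolding labelled_forest_def by blast

lemma labelled_forestD:
  assumes "labelled_forest Lab p q E"
  shows "finite E" "\<And>e. e \<in> E \<Longrightarrow> \<exists>c d. c \<noteq> d \<and> e = {c, d}"
    and "\<And>c d. {c, d} \<in> E \<Longrightarrow> \<not> reach (E - {{c, d}}) c d"
    and "\<And>z e1 e2. z \<in> Lab \<Longrightarrow> e1 \<in> E \<Longrightarrow> e2 \<in> E \<Longrightarrow> z \<in> e1 \<Longrightarrow> z \<in> e2 \<Longrightarrow> e1 = e2"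
    and "reach E p q" "p \<in> Lab" "q \<in> Lab"
  using assms unfolding labelled_forest_def by blast+

lemma labelled_forest_subset:
  assumes forest: "labelled_forest Lab p q E" and sub: "E' \<subseteq> E" and "reach E' p q"
  shows "labelled_forest Lab p q E'"
proof (rule labelled_forestI)
  fix c d
  assume "{c, d} \<in> E'"
  show "\<not> reach (E' - {{c, d}}) c d"
  proof
    assume "reach (E' - {{c, d}}) c d"
    then have "reach (E - {{c, d}}) c d"
      by (rule reach_mono) (use sub in blast)
    with labelled_forestD(3)[OF forest] \<open>{c, d} \<in> E'\<close> sub show False by blast
  qed
qed (use labelled_forestD[OF forest] sub finite_subset \<open>reach E' p q\<close> in blast)+

lemma proper_edge_ends_distinct:
  assumes "\<And>e. e \<in> E \<Longrightarrow> \<exists>c d. c \<noteq> d \<and> e = {c, d}" "{x, a} \<in> E"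
  shows "a \<noteq> x"
  using assms by (metis doubleton_eq_iff insert_absorb2)

definition edges_of_width :: "'v set \<Rightarrow> ('v set \<Rightarrow> nat) \<Rightarrow> 'm set set \<Rightarrow> ('v \<Rightarrow> 'm) \<Rightarrow> nat \<Rightarrow> 'm set set" where
  "edges_of_width V f E lab k = {e \<in> E. \<exists>a b. e = {a, b} \<and> f (side V E lab a b) = k}"

lemma n_width_edges_eq_card: "n_width_edges V f E lab k = card (edges_of_width V f E lab k)"
  unfolding n_width_edges_def edges_of_width_def ..

lemma widths_le_if_sides_agree:
  assumes "finite E" "E' \<subseteq> E"
    and "\<And>c d. {c, d} \<in> E' \<Longrightarrow> side V E' lab c d = side V E lab c d"
  shows "edge_widths V f E' lab \<subseteq> edge_widths V f E lab"
    and "n_width_edges V f E' lab k \<le> n_width_edges V f E lab k"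
proof -
  show "edge_widths V f E' lab \<subseteq> edge_widths V f E lab"
    unfolding edge_widths_def using assms(2,3) by fastforce
  have "edges_of_width V f E' lab k \<subseteq> edges_of_width V f E lab k"
    unfolding edges_of_width_def using assms(2,3) by fastforce
  then show "n_width_edges V f E' lab k \<le> n_width_edges V f E lab k"
    unfolding n_width_edges_eq_card using assms(1) by (simp add: card_mono edges_of_width_def)
qed

lemma card_le_card_exchange:
  assumes "finite B" "A \<subseteq> insert a (B - C)" "a \<in> A \<Longrightarrow> B \<inter> C \<noteq> {}"
  shows "card A \<le> card B"
proof (cases "a \<in> A")
  case True
  have "B - C \<subset> B" using assms(3)[OF True] by blast
  then have "card (B - C) < card B" using assms(1) by (rule psubset_card_mono[rotated])
  moreover have "card A \<le> card (insert a (B - C))"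
    using assms(1,2) by (intro card_mono) auto
  moreover have "card (insert a (B - C)) \<le> Suc (card (B - C))"
    using assms(1) by (simp add: card_insert_if)
  ultimately show ?thesis by linarith
next
  case False
  then have "A \<subseteq> B" using assms(2) by blast
  then show ?thesis using assms(1) by (rule card_mono[rotated])
qed

context
  fixes V :: "'v set" and lab :: "'v \<Rightarrow> 'm" and p q :: 'm and E :: "'m set set" and x y :: 'm
  assumes forest: "labelled_forest (lab ` V) p q E" and pendant: "{e\<in>E. x \<in> e} = {{x, y}}"
    and unlabelled: "x \<notin> lab ` V"
begin

lemma pendant_edge: "{x, y} \<in> E"
  using pendant by (metis (no_types, lifting) CollectD insertI1)

lemma pendant_neighbour: "y \<noteq> x"
  by (rule proper_edge_ends_distinct[OF labelled_forestD(2)[OF forest] pendant_edge])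

lemma reach_delete_pendant_iff:
  "G \<subseteq> E \<Longrightarrow> c \<noteq> x \<Longrightarrow> z \<noteq> x \<Longrightarrow> reach {e\<in>G. x \<notin> e} c z \<longleftrightarrow> reach G c z"
  using reach_remove_pendant_iff[of G x y c z] pendant pendant_neighbour by auto

lemma labelled_forest_delete: "labelled_forest (lab ` V) p q {e\<in>E. x \<notin> e}"
proof (rule labelled_forest_subset[OF forest])
  show "reach {e\<in>E. x \<notin> e} p q"
    using reach_delete_pendant_iff[of E p q] labelled_forestD(5-7)[OF forest] unlabelled by auto
qed auto

lemma side_delete: "c \<noteq> x \<Longrightarrow> side V {e\<in>E. x \<notin> e} lab c d = side V E lab c d"
proof -
  assume "c \<noteq> x"
  moreover have "{e\<in>E. x \<notin> e} - {{c, d}} = {e\<in>E - {{c, d}}. x \<notin> e}" by auto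
  moreover have "lab z \<noteq> x" if "z \<in> V" for z
    using unlabelled that by auto
  ultimately show ?thesis
    unfolding side_def using reach_delete_pendant_iff[of "E - {{c, d}}" c] by auto
qed

lemma widths_delete:
  shows "edge_widths V f {e\<in>E. x \<notin> e} lab \<subseteq> edge_widths V f E lab"
    and "n_width_edges V f {e\<in>E. x \<notin> e} lab k \<le> n_width_edges V f E lab k"
proof -
  have sides: "side V {e\<in>E. x \<notin> e} lab c d = side V E lab c d" if "{c, d} \<in> {e\<in>E. x \<notin> e}" for c d
    using that by (intro side_delete) auto
  show "edge_widths V f {e\<in>E. x \<notin> e} lab \<subseteq> edge_widths V f E lab"
    by (rule widths_le_if_sides_agree(1)[OF labelled_forestD(1)[OF forest] _ sides]) auto
  show "n_width_edges V f {e\<in>E. x \<notin> e} lab k \<le> n_width_edges V f E lab k"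
    by (rule widths_le_if_sides_agree(2)[OF labelled_forestD(1)[OF forest] _ sides]) auto
qed

end

context
  fixes V :: "'v set" and lab :: "'v \<Rightarrow> 'm" and p q :: 'm and E :: "'m set set" and x a b :: 'm
  assumes forest: "labelled_forest (lab ` V) p q E" and degree: "deg E x = 2"
    and xa: "{x, a} \<in> E" and xb: "{x, b} \<in> E" and ab: "a \<noteq> b"
begin

lemma suppressed_neighbours: "a \<noteq> x" "b \<noteq> x"
  using proper_edge_ends_distinct[OF labelled_forestD(2)[OF forest]] xa xb by blast+

lemma suppressed_node_edges: "{e\<in>E. x \<in> e} = {{x, a}, {x, b}}"
proof (rule sym, rule card_subset_eq)
  show "finite {e\<in>E. x \<in> e}"
    using labelled_forestD(1)[OF forest] by simp
  show "{{x, a}, {x, b}} \<subseteq> {e\<in>E. x \<in> e}"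
    using xa xb by auto
  show "card {{x, a}, {x, b}} = card {e\<in>E. x \<in> e}"
    using degree ab by (simp add: deg_def doubleton_eq_iff)
qed

lemma suppressed_node_edge_cases: "e \<in> E \<Longrightarrow> x \<in> e \<Longrightarrow> e = {x, a} \<or> e = {x, b}"
proof -
  assume "e \<in> E" "x \<in> e"
  then have "e \<in> {e\<in>E. x \<in> e}" by simp
  then show ?thesis unfolding suppressed_node_edges by simp
qed

lemma suppressed_node_unlabelled: "x \<notin> lab ` V"
proof
  assume "x \<in> lab ` V"
  then have "{x, a} = {x, b}"
    using labelled_forestD(4)[OF forest _ xa xb] by simp
  with ab show False by (simp add: doubleton_eq_iff)
qed

lemma shortcut_not_edge: "{a, b} \<notin> E"
proof
  assume abE: "{a, b} \<in> E"
  have "{x, a} \<in> E - {{a, b}}" "{x, b} \<in> E - {{a, b}}"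
    using xa xb suppressed_neighbours by (auto simp: doubleton_eq_iff)
  then have "reach (E - {{a, b}}) a b"
    by (metis reach_edge reach_sym reach_trans)
  with labelled_forestD(3)[OF forest abE] show False ..
qed

lemma reach_suppress_iff:
  assumes "G \<subseteq> E" "{x, a} \<in> G" "{x, b} \<in> G" "c \<noteq> x" "z \<noteq> x"
  shows "reach ({e\<in>G. x \<notin> e} \<union> {{a, b}}) c z \<longleftrightarrow> reach G c z"
proof
  show "reach ({e\<in>G. x \<notin> e} \<union> {{a, b}}) c z \<Longrightarrow> reach G c z"
    using assms(2,3) by (rule reach_unsuppress)
  have "\<forall>e\<in>G. x \<in> e \<longrightarrow> e = {x, a} \<or> e = {x, b}"
    using suppressed_node_edge_cases assms(1) by blast
  then show "reach G c z \<Longrightarrow> reach ({e\<in>G. x \<notin> e} \<union> {{a, b}}) c z"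
    using reach_suppress[of G x a b c z] suppressed_neighbours assms(4,5) by blast
qed

lemma side_suppress_old:
  assumes "x \<notin> {c, d}" "{c, d} \<noteq> {a, b}"
  shows "side V ({e\<in>E. x \<notin> e} \<union> {{a, b}}) lab c d = side V E lab c d"
proof -
  have eq: "({e\<in>E. x \<notin> e} \<union> {{a, b}}) - {{c, d}} = {e\<in>E - {{c, d}}. x \<notin> e} \<union> {{a, b}}"
    using assms(2) by blast
  have "{x, a} \<noteq> {c, d}" "{x, b} \<noteq> {c, d}"
    using assms(1) by (metis insertI1)+
  then have "{x, a} \<in> E - {{c, d}}" "{x, b} \<in> E - {{c, d}}"
    using xa xb by simp_all
  moreover have "lab z \<noteq> x" if "z \<in> V" for z
    using that suppressed_node_unlabelled by auto
  ultimately have "reach (({e\<in>E. x \<notin> e} \<union> {{a, b}}) - {{c, d}}) c (lab z) \<longleftrightarrow>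
      reach (E - {{c, d}}) c (lab z)" if "z \<in> V" for z
    unfolding eq using that assms(1) by (intro reach_suppress_iff) auto
  then show ?thesis
    unfolding side_def by auto
qed

lemma side_suppress_new:
  assumes "{c, d} = {a, b}" "c \<noteq> d"
  shows "side V ({e\<in>E. x \<notin> e} \<union> {{a, b}}) lab c d = side V E lab c x"
proof -
  have "({e\<in>E. x \<notin> e} \<union> {{a, b}}) - {{c, d}} = {e\<in>E - {{x, c}}. x \<notin> e}"
    using assms(1) shortcut_not_edge by auto
  moreover have "\<forall>e\<in>E - {{x, c}}. x \<in> e \<longrightarrow> e = {x, d}"
    using suppressed_node_edge_cases assms by (auto simp: doubleton_eq_iff)
  moreover have "c \<noteq> x" "d \<noteq> x"
    using assms suppressed_neighbours by (auto simp: doubleton_eq_iff)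
  moreover have "lab z \<noteq> x" if "z \<in> V" for z
    using that suppressed_node_unlabelled by auto
  ultimately have "reach (({e\<in>E. x \<notin> e} \<union> {{a, b}}) - {{c, d}}) c (lab z) \<longleftrightarrow>
      reach (E - {{c, x}}) c (lab z)" if "z \<in> V" for z
    using that reach_remove_pendant_iff[of "E - {{x, c}}" x d c "lab z"] by (simp add: insert_commute)
  then show ?thesis
    unfolding side_def by auto
qed

lemma bridges_suppress:
  assumes cd: "{c, d} \<in> {e\<in>E. x \<notin> e} \<union> {{a, b}}"
  shows "\<not> reach ({e\<in>E. x \<notin> e} \<union> {{a, b}} - {{c, d}}) c d"
proof
  assume r: "reach ({e\<in>E. x \<notin> e} \<union> {{a, b}} - {{c, d}}) c d"
  show False
  proof (cases "{c, d} = {a, b}")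
    case True
    have "reach (E - {{x, a}}) c d"
      by (rule reach_mono[OF r]) (use True in auto)
    then have "reach (E - {{x, a}}) a b"
      using True reach_sym by (metis doubleton_eq_iff)
    moreover have "{x, b} \<in> E - {{x, a}}"
      using xb ab by (simp add: doubleton_eq_iff)
    then have "reach (E - {{x, a}}) b x"
      by (rule reach_sym[OF reach_edge])
    ultimately have "reach (E - {{x, a}}) a x"
      by (rule reach_trans)
    then have "reach (E - {{x, a}}) x a"
      by (rule reach_sym)
    with labelled_forestD(3)[OF forest xa] show False ..
  next
    case False
    then have cdE: "{c, d} \<in> E" and "x \<notin> {c, d}"
      using cd by auto
    then have "{x, a} \<noteq> {c, d}" "{x, b} \<noteq> {c, d}"
      by (metis insertI1)+
    then have xa': "{x, a} \<in> E - {{c, d}}" and xb': "{x, b} \<in> E - {{c, d}}"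
      using xa xb by simp_all
    have "({e\<in>E. x \<notin> e} \<union> {{a, b}}) - {{c, d}} = {e\<in>E - {{c, d}}. x \<notin> e} \<union> {{a, b}}"
      using False by blast
    with r have "reach ({e\<in>E - {{c, d}}. x \<notin> e} \<union> {{a, b}}) c d"
      by simp
    then have "reach (E - {{c, d}}) c d"
      by (rule reach_unsuppress[OF xa' xb'])
    with labelled_forestD(3)[OF forest cdE] show False ..
  qed
qed

lemma labelled_node_unique_edge_suppress:
  assumes z: "z \<in> lab ` V"
    and e: "e1 \<in> {e\<in>E. x \<notin> e} \<union> {{a, b}}" "e2 \<in> {e\<in>E. x \<notin> e} \<union> {{a, b}}" "z \<in> e1" "z \<in> e2"
  shows "e1 = e2"
proof -
  have not_old: False if "e \<in> E" "x \<notin> e" "z \<in> e" "z \<in> {a, b}" for e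
  proof -
    have "{x, z} \<in> E"
      using that(4) xa xb by auto
    then have "e = {x, z}"
      using labelled_forestD(4)[OF forest z that(1)] that(3) by blast
    with that(2) show False by simp
  qed
  show "e1 = e2"
    using e not_old labelled_forestD(4)[OF forest z, of e1 e2] by blast
qed

lemma labelled_forest_suppress: "labelled_forest (lab ` V) p q ({e\<in>E. x \<notin> e} \<union> {{a, b}})"
proof (rule labelled_forestI)
  show "finite ({e\<in>E. x \<notin> e} \<union> {{a, b}})"
    using labelled_forestD(1)[OF forest] by simp
  show "\<exists>c d. c \<noteq> d \<and> e = {c, d}" if "e \<in> {e\<in>E. x \<notin> e} \<union> {{a, b}}" for e
    using that labelled_forestD(2)[OF forest] ab by auto
  show "\<not> reach ({e\<in>E. x \<notin> e} \<union> {{a, b}} - {{c, d}}) c d"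
    if "{c, d} \<in> {e\<in>E. x \<notin> e} \<union> {{a, b}}" for c d
    using that by (rule bridges_suppress)
  show "e1 = e2" if "z \<in> lab ` V" "e1 \<in> {e\<in>E. x \<notin> e} \<union> {{a, b}}"
    "e2 \<in> {e\<in>E. x \<notin> e} \<union> {{a, b}}" "z \<in> e1" "z \<in> e2" for z e1 e2
    using that by (rule labelled_node_unique_edge_suppress)
  have "p \<noteq> x" "q \<noteq> x"
    using labelled_forestD(6,7)[OF forest] suppressed_node_unlabelled by auto
  then show "reach ({e\<in>E. x \<notin> e} \<union> {{a, b}}) p q"
    using reach_suppress_iff[of E] xa xb labelled_forestD(5)[OF forest] by blast
qed (use labelled_forestD(6,7)[OF forest] in auto)

lemma side_suppress_new_edge:
  assumes "{c, d} = {a, b}"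
  shows "{c, x} \<in> E" "side V ({e\<in>E. x \<notin> e} \<union> {{a, b}}) lab c d = side V E lab c x"
proof -
  have "c \<noteq> d" "c = a \<or> c = b"
    using assms ab by (auto simp: doubleton_eq_iff)
  then show "{c, x} \<in> E" "side V ({e\<in>E. x \<notin> e} \<union> {{a, b}}) lab c d = side V E lab c x"
    using side_suppress_new[OF assms] xa xb by (auto simp: insert_commute)
qed

lemma edge_widths_suppress:
  "edge_widths V f ({e\<in>E. x \<notin> e} \<union> {{a, b}}) lab \<subseteq> edge_widths V f E lab"
proof
  fix w
  assume "w \<in> edge_widths V f ({e\<in>E. x \<notin> e} \<union> {{a, b}}) lab"
  then obtain c d where cd: "{c, d} \<in> {e\<in>E. x \<notin> e} \<union> {{a, b}}"
    "w = f (side V ({e\<in>E. x \<notin> e} \<union> {{a, b}}) lab c d)"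
    unfolding edge_widths_def by blast
  show "w \<in> edge_widths V f E lab"
  proof (cases "{c, d} = {a, b}")
    case True
    with cd(2) show ?thesis
      using side_suppress_new_edge[OF True] unfolding edge_widths_def by auto
  next
    case False
    with cd show ?thesis
      using side_suppress_old unfolding edge_widths_def by auto
  qed
qed

lemma n_width_edges_suppress:
  "n_width_edges V f ({e\<in>E. x \<notin> e} \<union> {{a, b}}) lab k \<le> n_width_edges V f E lab k"
  unfolding n_width_edges_eq_card
proof (rule card_le_card_exchange)
  let ?E' = "{e\<in>E. x \<notin> e} \<union> {{a, b}}"
  show "finite (edges_of_width V f E lab k)"
    using labelled_forestD(1)[OF forest] by (simp add: edges_of_width_def)
  show "edges_of_width V f ?E' lab k \<subseteq> insert {a, b} (edges_of_width V f E lab k - {{x, a}, {x, b}})"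
  proof
    fix e
    assume "e \<in> edges_of_width V f ?E' lab k"
    then obtain c d where cd: "e \<in> ?E'" "e = {c, d}" "f (side V ?E' lab c d) = k"
      unfolding edges_of_width_def by blast
    show "e \<in> insert {a, b} (edges_of_width V f E lab k - {{x, a}, {x, b}})"
    proof (cases "e = {a, b}")
      case False
      with cd have "e \<in> E" "x \<notin> {c, d}" "f (side V E lab c d) = k"
        using side_suppress_old[of c d] by auto
      with cd(2) show ?thesis
        unfolding edges_of_width_def by auto
    qed simp
  qed
  assume "{a, b} \<in> edges_of_width V f ?E' lab k"
  then obtain c d where cd: "{a, b} = {c, d}" "f (side V ?E' lab c d) = k"
    unfolding edges_of_width_def by blast
  with side_suppress_new_edge[OF cd(1)[symmetric]] have "{c, x} \<in> edges_of_width V f E lab k"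
    unfolding edges_of_width_def by auto
  moreover have "c = a \<or> c = b"
    using cd(1) by (auto simp: doubleton_eq_iff)
  then have "{c, x} \<in> {{x, a}, {x, b}}"
    by (elim disjE) (simp_all add: insert_commute)
  ultimately show "edges_of_width V f E lab k \<inter> {{x, a}, {x, b}} \<noteq> {}"
    by blast
qed

end

lemma labelled_forest_pendant:
  assumes "labelled_forest Lab p q E" "deg E x = 1"
  obtains y where "{e\<in>E. x \<in> e} = {{x, y}}"
proof -
  obtain e where e: "{e\<in>E. x \<in> e} = {e}"
    using assms(2) by (auto simp: deg_def card_1_singleton_iff)
  then have "e \<in> E" "x \<in> e" by auto
  then obtain c d where "c \<noteq> d" "e = {c, d}"
    using labelled_forestD(2)[OF assms(1)] by blast
  with \<open>x \<in> e\<close> obtain y where "e = {x, y}"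
    by auto
  with e that show thesis by blast
qed

lemma cleanup_step_preserves:
  assumes "cleanup_step (lab ` V) (N, E) (N', E')" and forest: "labelled_forest (lab ` V) p q E"
  shows "labelled_forest (lab ` V) p q E' \<and> edge_widths V f E' lab \<subseteq> edge_widths V f E lab
    \<and> n_width_edges V f E' lab k \<le> n_width_edges V f E lab k"
  using assms(1)
proof cases
  case (delete x)
  obtain y where pendant: "{e\<in>E. x \<in> e} = {{x, y}}"
    using labelled_forest_pendant[OF forest \<open>deg E x = 1\<close>] .
  with delete show ?thesis
    using labelled_forest_delete[OF forest pendant] widths_delete[OF forest pendant] by simp
next
  case (suppress x a b)
  then show ?thesis
    using labelled_forest_suppress[OF forest] edge_widths_suppress[OF forest] n_width_edges_suppress[OF forest]
    by simp
qed

lemma cleanup_steps_preserve: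
  assumes "(cleanup_step (lab ` V))\<^sup>*\<^sup>* (N, E) (N', E')" and "labelled_forest (lab ` V) p q E"
  shows "labelled_forest (lab ` V) p q E' \<and> edge_widths V f E' lab \<subseteq> edge_widths V f E lab
    \<and> n_width_edges V f E' lab k \<le> n_width_edges V f E lab k"
  using assms
proof (induction rule: rtranclp_induct2)
  case refl
  then show ?case by simp
next
  case (step N1 E1 N2 E2)
  note IH = step.IH[OF step.prems]
  with cleanup_step_preserves[OF step.hyps(2) conjunct1[OF IH], of f k] show ?case
    by auto
qed

lemma cleanup_width_le:
  assumes "(cleanup_step (lab ` V))\<^sup>*\<^sup>* (N, E) (N', E')" "labelled_forest (lab ` V) p q E"
    and "p \<noteq> q" "edge_widths V f E lab \<subseteq> {..k}"
  shows "dwidth V f E' lab \<le> k"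
proof -
  have forest: "labelled_forest (lab ` V) p q E'" and widths: "edge_widths V f E' lab \<subseteq> {..k}"
    using cleanup_steps_preserve[OF assms(1,2), of f k] assms(4) by auto
  obtain y where "(p, y) \<in> adj E'"
    using labelled_forestD(5)[OF forest] \<open>p \<noteq> q\<close> unfolding reach_def
    by (metis converse_rtranclE)
  then have "f (side V E' lab p y) \<in> edge_widths V f E' lab"
    unfolding edge_widths_def by auto
  moreover have "finite (edge_widths V f E' lab)"
    using widths finite_subset by blast
  ultimately show ?thesis
    unfolding dwidth_def using widths by (subst Max_le_iff) auto
qed


section \<open>Connectivity functions and improvements\<close>

definition minimal_improvement ::
  "'v set \<Rightarrow> ('v set \<Rightarrow> nat) \<Rightarrow> 'v set \<Rightarrow> 'v set \<Rightarrow> 'v set \<Rightarrow> 'v set \<Rightarrow> bool" where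
  "minimal_improvement V f W C1 C2 C3 \<longleftrightarrow> improvement V f W C1 C2 C3
     \<and> (\<forall>D1 D2 D3. improvement V f W D1 D2 D3 \<longrightarrow> f C1 + f C2 + f C3 \<le> f D1 + f D2 + f D3)"

lemma exists_minimal_improvement:
  assumes "improvement V f W D1 D2 D3"
  shows "\<exists>C1 C2 C3. minimal_improvement V f W C1 C2 C3"
proof -
  let ?P = "\<lambda>(C1, C2, C3). improvement V f W C1 C2 C3"
  let ?m = "\<lambda>(C1, C2, C3). f C1 + f C2 + f C3"
  obtain C where "?P C" "\<And>D. ?P D \<Longrightarrow> ?m C \<le> ?m D"
    using ex_has_least_nat[of ?P "(D1, D2, D3)" ?m] assms by auto
  then show ?thesis
    unfolding minimal_improvement_def by (cases C) force
qed

lemma improvement_swap12: "improvement V f W C2 C1 C3 \<longleftrightarrow> improvement V f W C1 C2 C3"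
  unfolding improvement_def by (auto simp: insert_commute Int_commute Un_commute Un_left_commute)

lemma improvement_swap13: "improvement V f W C3 C2 C1 \<longleftrightarrow> improvement V f W C1 C2 C3"
  unfolding improvement_def by (auto simp: insert_commute Int_commute Un_commute Un_left_commute)

lemma minimal_improvement_swap12:
  assumes "minimal_improvement V f W C1 C2 C3"
  shows "minimal_improvement V f W C2 C1 C3"
  unfolding minimal_improvement_def
proof (intro conjI allI impI)
  show "improvement V f W C2 C1 C3"
    using assms improvement_swap12 unfolding minimal_improvement_def by blast
  fix D1 D2 D3
  assume "improvement V f W D1 D2 D3"
  then have "f C1 + f C2 + f C3 \<le> f D1 + f D2 + f D3"
    using assms unfolding minimal_improvement_def by blast
  then show "f C2 + f C1 + f C3 \<le> f D1 + f D2 + f D3"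
    by linarith
qed

lemma minimal_improvement_swap13:
  assumes "minimal_improvement V f W C1 C2 C3"
  shows "minimal_improvement V f W C3 C2 C1"
  unfolding minimal_improvement_def
proof (intro conjI allI impI)
  show "improvement V f W C3 C2 C1"
    using assms improvement_swap13 unfolding minimal_improvement_def by blast
  fix D1 D2 D3
  assume "improvement V f W D1 D2 D3"
  then have "f C1 + f C2 + f C3 \<le> f D1 + f D2 + f D3"
    using assms unfolding minimal_improvement_def by blast
  then show "f C3 + f C2 + f C1 \<le> f D1 + f D2 + f D3"
    by linarith
qed

lemma improvement_move_into_first:
  assumes imp: "improvement V f W C1 C2 C3" and "Z \<subseteq> W" "W \<subseteq> V"
    and "f (C1 \<union> Z) \<le> f C1" "f ((C1 \<inter> W) \<union> Z) \<le> f (C1 \<inter> W)"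
    and "f (C2 - Z) \<le> f C2" "f ((C2 \<inter> W) - Z) \<le> f (C2 \<inter> W)"
    and "f (C3 - Z) \<le> f C3" "f ((C3 \<inter> W) - Z) \<le> f (C3 \<inter> W)"
  shows "improvement V f W (C1 \<union> Z) (C2 - Z) (C3 - Z)"
proof -
  have "(C1 \<union> Z) \<inter> W = (C1 \<inter> W) \<union> Z" "(C1 \<union> Z) \<inter> (V - W) = C1 \<inter> (V - W)"
    "(C2 - Z) \<inter> W = (C2 \<inter> W) - Z" "(C2 - Z) \<inter> (V - W) = C2 \<inter> (V - W)"
    "(C3 - Z) \<inter> W = (C3 \<inter> W) - Z" "(C3 - Z) \<inter> (V - W) = C3 \<inter> (V - W)"
    using \<open>Z \<subseteq> W\<close> by blast+
  with assms have "\<forall>C\<in>{C1 \<union> Z, C2 - Z, C3 - Z}.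
      2 * f C < f W \<and> f (C \<inter> W) < f W \<and> f (C \<inter> (V - W)) < f W"
    unfolding improvement_def by auto
  moreover have "(C1 \<union> Z) \<inter> (C2 - Z) = {}" "(C1 \<union> Z) \<inter> (C3 - Z) = {}" "(C2 - Z) \<inter> (C3 - Z) = {}"
    "C1 \<union> Z \<union> (C2 - Z) \<union> (C3 - Z) = V"
    using imp \<open>Z \<subseteq> W\<close> \<open>W \<subseteq> V\<close> unfolding improvement_def by blast+
  ultimately show ?thesis
    unfolding improvement_def by blast
qed

context
  fixes V :: "'v set" and f :: "'v set \<Rightarrow> nat"
  assumes cf: "connectivity_function V f"
begin

lemma cf_empty: "f {} = 0"
  using cf unfolding connectivity_function_def by blast

lemma cf_complement: "X \<subseteq> V \<Longrightarrow> f (V - X) = f X"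
  using cf unfolding connectivity_function_def by metis

lemma cf_submodular: "X \<subseteq> V \<Longrightarrow> Y \<subseteq> V \<Longrightarrow> f (X \<union> Y) + f (X \<inter> Y) \<le> f X + f Y"
  using cf unfolding connectivity_function_def by blast

lemma cf_posimodular:
  assumes "A \<subseteq> V" "B \<subseteq> V"
  shows "f (A - B) + f (B - A) \<le> f A + f B"
proof -
  have "A \<union> (V - B) = V - (B - A)" "A \<inter> (V - B) = A - B"
    using assms by blast+
  then show ?thesis
    using cf_submodular[of A "V - B"] cf_complement[of "B - A"] cf_complement[of B] assms
    by (simp add: Diff_subset subset_trans[of _ B V])
qed

lemma improvement_complement:
  assumes "W \<subseteq> V"
  shows "improvement V f (V - W) C1 C2 C3 \<longleftrightarrow> improvement V f W C1 C2 C3"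
proof -
  have "V - (V - W) = W"
    using assms by blast
  then show ?thesis
    unfolding improvement_def using cf_complement[OF assms] by (simp add: conj_commute)
qed

lemma minimal_improvement_complement:
  "W \<subseteq> V \<Longrightarrow> minimal_improvement V f W C1 C2 C3 \<Longrightarrow> minimal_improvement V f (V - W) C1 C2 C3"
  unfolding minimal_improvement_def using improvement_complement by blast

text \<open>Take Z of least f among the subsets of X that meet C1 exactly in X \<inter> C1.
  If f (X \<inter> C1) > f X, then moving Z into C1 strictly lowers f C1 by submodularity and does not
  raise f C2, f C3 by posimodularity, contradicting minimality.\<close>

lemma minimal_improvement_restrict_first:
  assumes "W \<subseteq> V" and min: "minimal_improvement V f W C1 C2 C3" and "X \<subseteq> W"
  shows "f (X \<inter> C1) \<le> f X"
proof (rule ccontr)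
  assume "\<not> f (X \<inter> C1) \<le> f X"
  define P where "P = X \<inter> C1"
  have "\<exists>Z. (Z \<subseteq> X \<and> Z \<inter> C1 = P) \<and> (\<forall>Y. Y \<subseteq> X \<and> Y \<inter> C1 = P \<longrightarrow> f Z \<le> f Y)"
    by (rule ex_has_least_nat[where k = X]) (simp add: P_def)
  then obtain Z where Z: "Z \<subseteq> X" "Z \<inter> C1 = P"
    and least: "\<forall>Y. Y \<subseteq> X \<and> Y \<inter> C1 = P \<longrightarrow> f Z \<le> f Y"
    by (elim exE conjE)
  have Zmin: "f Z \<le> f Y" if "Y \<subseteq> X" "Y \<inter> C1 = P" for Y
    using least that by blast
  have fZ: "f Z < f P"
    using Zmin[of X] \<open>\<not> f (X \<inter> C1) \<le> f X\<close> unfolding P_def by simp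
  have imp: "improvement V f W C1 C2 C3"
    using min unfolding minimal_improvement_def by blast
  then have parts: "C1 \<subseteq> V" "C2 \<subseteq> V" "C3 \<subseteq> V" "C1 \<inter> C2 = {}" "C1 \<inter> C3 = {}"
    unfolding improvement_def by blast+
  have ZV: "Z \<subseteq> V" "Z \<subseteq> W"
    using Z \<open>X \<subseteq> W\<close> \<open>W \<subseteq> V\<close> by auto
  have grow: "f (C \<union> Z) < f C" if "C \<subseteq> V" "C \<inter> Z = P" for C
    using cf_submodular[OF that(1) ZV(1)] fZ unfolding that(2) by linarith
  have shrink: "f (C - Z) \<le> f C" if "C \<subseteq> V" "C1 \<inter> C = {}" for C
  proof -
    have "f Z \<le> f (Z - C)"
      using Zmin[of "Z - C"] Z that(2) by blast
    then show ?thesis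
      using cf_posimodular[OF that(1) ZV(1)] by simp
  qed
  have "C1 \<inter> Z = P" "(C1 \<inter> W) \<inter> Z = P" "C1 \<inter> (C2 \<inter> W) = {}" "C1 \<inter> (C3 \<inter> W) = {}"
    and sub: "C1 \<inter> W \<subseteq> V" "C2 \<inter> W \<subseteq> V" "C3 \<inter> W \<subseteq> V"
    using Z ZV parts by blast+
  then have less: "f (C1 \<union> Z) < f C1" "f ((C1 \<inter> W) \<union> Z) < f (C1 \<inter> W)"
    and le: "f (C2 - Z) \<le> f C2" "f ((C2 \<inter> W) - Z) \<le> f (C2 \<inter> W)"
    "f (C3 - Z) \<le> f C3" "f ((C3 \<inter> W) - Z) \<le> f (C3 \<inter> W)"
    using grow[OF parts(1)] grow[OF sub(1)] shrink[OF parts(2,4)] shrink[OF sub(2)]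
      shrink[OF parts(3,5)] shrink[OF sub(3)] by simp_all
  then have "improvement V f W (C1 \<union> Z) (C2 - Z) (C3 - Z)"
    using improvement_move_into_first[OF imp ZV(2) \<open>W \<subseteq> V\<close>] by simp
  then have "f C1 + f C2 + f C3 \<le> f (C1 \<union> Z) + f (C2 - Z) + f (C3 - Z)"
    using min unfolding minimal_improvement_def by blast
  with less(1) le(1,3) show False
    by linarith
qed

lemma minimal_improvement_restrict:
  assumes "W \<subseteq> V" "minimal_improvement V f W C1 C2 C3" "X \<subseteq> W \<or> X \<subseteq> V - W"
  shows "f (X \<inter> C1) \<le> f X" "f (X \<inter> C2) \<le> f X" "f (X \<inter> C3) \<le> f X"
proof -
  have all: "f (X \<inter> C1) \<le> f X \<and> f (X \<inter> C2) \<le> f X \<and> f (X \<inter> C3) \<le> f X"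
    if "W' \<subseteq> V" "minimal_improvement V f W' C1 C2 C3" "X \<subseteq> W'" for W'
    using minimal_improvement_restrict_first[OF that(1) _ that(3)] that(2)
      minimal_improvement_swap12 minimal_improvement_swap13 by blast
  from assms(3) show "f (X \<inter> C1) \<le> f X" "f (X \<inter> C2) \<le> f X" "f (X \<inter> C3) \<le> f X"
    using all[OF assms(1,2)] all[OF _ minimal_improvement_complement[OF assms(1,2)]] by auto
qed

lemma cut_lt_of_le_restrictions:
  assumes "X \<subseteq> V" "A \<subseteq> V" "B \<subseteq> V" "A \<inter> B = {}" "2 * f A < t" "2 * f B < t"
    and "f X \<le> f (X \<inter> A)" "f X \<le> f (X \<inter> B)"
  shows "f X < t"
proof -
  have "f (X \<union> A) \<le> f A" "f (X \<union> B) \<le> f B"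
    using cf_submodular[of X A] cf_submodular[of X B] assms by simp_all
  moreover have "(X \<union> A) \<inter> (X \<union> B) = X"
    using \<open>A \<inter> B = {}\<close> by blast
  then have "f ((X \<union> A) \<union> (X \<union> B)) + f X \<le> f (X \<union> A) + f (X \<union> B)"
    using cf_submodular[of "X \<union> A" "X \<union> B"] assms(1-3) by simp
  ultimately show ?thesis
    using assms(5,6) by linarith
qed

end


section \<open>The refined tree before cleanup\<close>

lemma side_complement:
  assumes "\<not> reach (G - {{c, d}}) c d" "\<And>y. y \<in> V \<Longrightarrow> reach G c (lab y)"
  shows "side V G lab d c = V - side V G lab c d"
proof -
  have "reach (G - {{c, d}}) d (lab y) \<longleftrightarrow> \<not> reach (G - {{c, d}}) c (lab y)" if "y \<in> V" for y
    using reach_bridge_cases[OF assms(2)[OF that], of d] bridge_sides_disjoint[OF assms(1)] by blast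
  then show ?thesis
    unfolding side_def by (auto simp: insert_commute)
qed

lemma side_subset: "side V G lab c d \<subseteq> V"
  unfolding side_def by auto

locale refined_tree =
  fixes V :: "'v set" and N :: "'n set" and E :: "'n set set" and L :: "'v \<Rightarrow> 'n"
    and u v :: 'n and C1 C2 C3 :: "'v set"
  assumes decomposition: "branch_decomposition V N E L"
    and uv: "{u, v} \<in> E"
    and partition: "C1 \<inter> C2 = {}" "C1 \<inter> C3 = {}" "C2 \<inter> C3 = {}" "C1 \<union> C2 \<union> C3 = V"
begin

abbreviation E0 :: "'n rnode set set" where
  "E0 \<equiv> ref_edges E u v"

abbreviation lab :: "'v \<Rightarrow> 'n rnode" where
  "lab \<equiv> ref_label L C1 C2"

definition part :: "nat \<Rightarrow> 'v set" where
  "part i = (if i = 1 then C1 else if i = 2 then C2 else C3)"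

lemma tree_nodes_finite: "finite N"
  and tree_edge: "e \<in> E \<Longrightarrow> e \<subseteq> N \<and> card e = 2"
  and tree_connected: "a \<in> N \<Longrightarrow> b \<in> N \<Longrightarrow> reach E a b"
  and tree_bridge: "{a, b} \<in> E \<Longrightarrow> \<not> reach (E - {{a, b}}) a b"
  using decomposition unfolding branch_decomposition_def tree_def graph_def by blast+

lemma tree_edge_nodes: "{a, b} \<in> E \<Longrightarrow> a \<in> N \<and> b \<in> N"
  using tree_edge by blast

lemma tree_edge_ne: "{a, b} \<in> E \<Longrightarrow> a \<noteq> b"
  using tree_edge[of "{a, b}"] by auto

lemma tree_edges_finite: "finite E"
  using tree_nodes_finite tree_edge by (meson Pow_iff finite_Pow_iff finite_subset subsetI)

lemma leaf_labels: "bij_betw L V (leaves N E)"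
  using decomposition unfolding branch_decomposition_def by blast

lemma leaf_label_node: "y \<in> V \<Longrightarrow> L y \<in> N"
  and leaf_label_deg: "y \<in> V \<Longrightarrow> deg E (L y) = 1"
  using leaf_labels unfolding bij_betw_def leaves_def by blast+

lemma uv_nodes: "u \<in> N" "v \<in> N"
  using tree_edge_nodes[OF uv] by auto

lemma side_flip:
  assumes "{a, b} \<in> E"
  shows "side V E L b a = V - side V E L a b"
  using tree_bridge[OF assms] tree_connected tree_edge_nodes[OF assms] leaf_label_node
  by (intro side_complement) auto

lemma part_subset: "part i \<subseteq> V"
  using partition unfolding part_def by auto

lemma parts_disjoint: "i \<in> {1, 2, 3} \<Longrightarrow> j \<in> {1, 2, 3} \<Longrightarrow> i \<noteq> j \<Longrightarrow> part i \<inter> part j = {}"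
  using partition unfolding part_def by auto

lemma label_eq_iff:
  assumes "y \<in> V" "i \<in> {1, 2, 3}"
  shows "lab y = Cp i z \<longleftrightarrow> y \<in> part i \<and> z = L y"
  using assms partition unfolding ref_label_def part_def by auto

lemma label_cases: "y \<in> V \<Longrightarrow> \<exists>i\<in>{1, 2, 3}. lab y = Cp i (L y) \<and> y \<in> part i"
  using partition unfolding ref_label_def part_def by auto

lemma label_inj: "inj_on lab V"
proof (rule inj_onI)
  fix y1 y2
  assume "y1 \<in> V" "y2 \<in> V" "lab y1 = lab y2"
  moreover from \<open>lab y1 = lab y2\<close> have "L y1 = L y2"
    unfolding ref_label_def by (auto split: if_splits)
  ultimately show "y1 = y2"
    using leaf_labels unfolding bij_betw_def inj_on_def by blast
qed

lemma refined_edge_cases: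
  assumes "e \<in> E0"
  obtains (copy) i a b where "i \<in> {1, 2, 3}" "{a, b} \<in> E" "{a, b} \<noteq> {u, v}" "e = {Cp i a, Cp i b}"
  | (to_u) i where "i \<in> {1, 2, 3}" "e = {Cp i u, Sub i}"
  | (to_v) i where "i \<in> {1, 2, 3}" "e = {Sub i, Cp i v}"
  | (to_centre) i where "i \<in> {1, 2, 3}" "e = {Sub i, Ctr}"
proof -
  have "(\<exists>i a b. i \<in> {1, 2, 3} \<and> {a, b} \<in> E \<and> {a, b} \<noteq> {u, v} \<and> e = {Cp i a, Cp i b})
    \<or> (\<exists>i\<in>{1, 2, 3}. e = {Cp i u, Sub i} \<or> e = {Sub i, Cp i v} \<or> e = {Sub i, Ctr})"
    using assms unfolding ref_edges_def by blast
  then show ?thesis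
    by (elim disjE exE conjE bexE) (simp_all add: that)
qed

lemma copy_edge: "{a, b} \<in> E \<Longrightarrow> {a, b} \<noteq> {u, v} \<Longrightarrow> i \<in> {1, 2, 3} \<Longrightarrow> {Cp i a, Cp i b} \<in> E0"
  unfolding ref_edges_def by blast

lemma subdivision_edges:
  "i \<in> {1, 2, 3} \<Longrightarrow> {Cp i u, Sub i} \<in> E0 \<and> {Sub i, Cp i v} \<in> E0 \<and> {Sub i, Ctr} \<in> E0"
  unfolding ref_edges_def by blast

lemma copy_node_neighbours:
  assumes "{Cp i z, w} \<in> E0"
  shows "(\<exists>z'. w = Cp i z' \<and> {z, z'} \<in> E \<and> {z, z'} \<noteq> {u, v}) \<or> (w = Sub i \<and> (z = u \<or> z = v))"
  using assms
proof (cases rule: refined_edge_cases)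
  case (copy j a b)
  then have "z = a \<and> w = Cp i b \<or> z = b \<and> w = Cp i a"
    by (auto simp: doubleton_eq_iff)
  moreover have "{b, a} \<in> E" "{b, a} \<noteq> {u, v}"
    using copy by (simp_all add: insert_commute)
  ultimately show ?thesis
    using copy by blast
next
  case (to_u j)
  then show ?thesis by (simp add: doubleton_eq_iff)
next
  case (to_v j)
  then show ?thesis by (simp add: doubleton_eq_iff)
next
  case (to_centre j)
  then show ?thesis by (simp add: doubleton_eq_iff)
qed

lemma subdivision_node_neighbours:
  assumes "{Sub i, w} \<in> E0"
  shows "w = Cp i u \<or> w = Cp i v \<or> w = Ctr"
  using assms by (cases rule: refined_edge_cases) (auto simp: doubleton_eq_iff)

lemma reach_copy:
  assumes "reach F a z"
    and "\<And>y z. reach F a y \<Longrightarrow> {y, z} \<in> F \<Longrightarrow> {Cp i y, Cp i z} \<in> G"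
  shows "reach G (Cp i a) (Cp i z)"
  by (rule reach_map[OF assms(1)]) (rule reach_edge, rule assms(2))

lemma reach_avoiding_u_avoids_v:
  assumes "{a, b} \<noteq> {u, v}" "\<not> reach (E - {{a, b}}) a u"
  shows "\<not> reach (E - {{a, b}}) a v"
proof
  assume "reach (E - {{a, b}}) a v"
  moreover have "{v, u} \<in> E - {{a, b}}"
    using uv assms(1) by (simp add: insert_commute)
  ultimately show False
    using assms(2) reach_step by metis
qed

lemma cut_copy_edge_component:
  assumes ab: "{a, b} \<in> E" "{a, b} \<noteq> {u, v}" and no_u: "\<not> reach (E - {{a, b}}) a u"
    and "reach (E0 - {{Cp i a, Cp i b}}) (Cp i a) w"
  shows "\<exists>z. w = Cp i z \<and> reach (E - {{a, b}}) a z"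
proof -
  have no_v: "\<not> reach (E - {{a, b}}) a v"
    using reach_avoiding_u_avoids_v[OF ab(2) no_u] .
  let ?S = "{Cp i z | z. reach (E - {{a, b}}) a z}"
  from assms(4) have "w \<in> ?S"
  proof (rule reach_closed)
    fix y' w'
    assume e: "{y', w'} \<in> E0 - {{Cp i a, Cp i b}}" and "y' \<in> ?S"
    then obtain z where z: "y' = Cp i z" "reach (E - {{a, b}}) a z"
      by blast
    with e have "{Cp i z, w'} \<in> E0" by simp
    then show "w' \<in> ?S"
    proof (cases rule: copy_node_neighbours[THEN disjE])
      assume "\<exists>z'. w' = Cp i z' \<and> {z, z'} \<in> E \<and> {z, z'} \<noteq> {u, v}"
      then obtain z' where z': "w' = Cp i z'" "{z, z'} \<in> E"
        by blast
      from e z z'(1) have "{Cp i z, Cp i z'} \<noteq> {Cp i a, Cp i b}"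
        by simp
      then have "{z, z'} \<noteq> {a, b}"
        by (metis image_empty image_insert)
      with z'(2) have "reach (E - {{a, b}}) a z'"
        using reach_step[OF z(2)] by simp
      with z'(1) show ?thesis
        by blast
    next
      assume "w' = Sub i \<and> (z = u \<or> z = v)"
      with z no_u no_v show ?thesis by blast
    qed
  qed simp
  then show ?thesis
    by blast
qed

lemma reach_cut_copy_edge_copy:
  assumes ab: "{a, b} \<in> E" "{a, b} \<noteq> {u, v}" and i: "i \<in> {1, 2, 3}"
    and no_u: "\<not> reach (E - {{a, b}}) a u" and "reach (E - {{a, b}}) a z"
  shows "reach (E0 - {{Cp i a, Cp i b}}) (Cp i a) (Cp i z)"
  using assms(5)
proof (rule reach_copy)
  fix y z'
  assume y: "reach (E - {{a, b}}) a y" and e: "{y, z'} \<in> E - {{a, b}}"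
  have "y \<noteq> u" "y \<noteq> v"
    using y no_u reach_avoiding_u_avoids_v[OF ab(2) no_u] by auto
  then have "{Cp i y, Cp i z'} \<in> E0"
    using copy_edge[of y z' i] e i by (auto simp: doubleton_eq_iff)
  moreover have "{Cp i y, Cp i z'} \<noteq> {Cp i a, Cp i b}"
    using e by (auto simp: doubleton_eq_iff)
  ultimately show "{Cp i y, Cp i z'} \<in> E0 - {{Cp i a, Cp i b}}"
    by simp
qed

lemma reach_cut_copy_edge_iff:
  assumes "{a, b} \<in> E" "{a, b} \<noteq> {u, v}" "i \<in> {1, 2, 3}" "\<not> reach (E - {{a, b}}) a u"
  shows "reach (E0 - {{Cp i a, Cp i b}}) (Cp i a) w \<longleftrightarrow> (\<exists>z. w = Cp i z \<and> reach (E - {{a, b}}) a z)"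
  using cut_copy_edge_component[OF assms(1,2,4)] reach_cut_copy_edge_copy[OF assms] by blast

lemma cut_subdivision_edge_component:
  assumes pq: "{p, q} = {u, v}" and "reach (E0 - {{Cp i p, Sub i}}) (Cp i p) w"
  shows "\<exists>z. w = Cp i z \<and> reach (E - {{u, v}}) p z"
proof -
  have no_q: "\<not> reach (E - {{u, v}}) p q"
    using tree_bridge[OF uv] pq reach_sym by (metis doubleton_eq_iff)
  have pq_cases: "z = p \<or> z = q" if "z = u \<or> z = v" for z
    using that pq by (auto simp: doubleton_eq_iff)
  let ?S = "{Cp i z | z. reach (E - {{u, v}}) p z}"
  from assms(2) have "w \<in> ?S"
  proof (rule reach_closed)
    fix y' w'
    assume e: "{y', w'} \<in> E0 - {{Cp i p, Sub i}}" and "y' \<in> ?S"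
    then obtain z where z: "y' = Cp i z" "reach (E - {{u, v}}) p z"
      by blast
    with e have "{Cp i z, w'} \<in> E0" by simp
    then show "w' \<in> ?S"
    proof (cases rule: copy_node_neighbours[THEN disjE])
      assume "\<exists>z'. w' = Cp i z' \<and> {z, z'} \<in> E \<and> {z, z'} \<noteq> {u, v}"
      then obtain z' where z': "w' = Cp i z'" "{z, z'} \<in> E - {{u, v}}"
        by blast
      with reach_step[OF z(2)] show ?thesis
        by blast
    next
      assume w': "w' = Sub i \<and> (z = u \<or> z = v)"
      then have "z = p"
        using pq_cases z(2) no_q by blast
      with e z w' show ?thesis by simp
    qed
  qed simp
  then show ?thesis
    by blast
qed

lemma reach_cut_subdivision_edge_iff:
  assumes pq: "{p, q} = {u, v}" and i: "i \<in> {1, 2, 3}"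
  shows "reach (E0 - {{Cp i p, Sub i}}) (Cp i p) w \<longleftrightarrow> (\<exists>z. w = Cp i z \<and> reach (E - {{u, v}}) p z)"
proof
  show "reach (E0 - {{Cp i p, Sub i}}) (Cp i p) w \<Longrightarrow> \<exists>z. w = Cp i z \<and> reach (E - {{u, v}}) p z"
    by (rule cut_subdivision_edge_component[OF pq])
  assume "\<exists>z. w = Cp i z \<and> reach (E - {{u, v}}) p z"
  then obtain z where z: "w = Cp i z" "reach (E - {{u, v}}) p z"
    by blast
  have "reach (E0 - {{Cp i p, Sub i}}) (Cp i p) (Cp i z)"
  proof (rule reach_copy[OF z(2)])
    fix y z'
    assume "{y, z'} \<in> E - {{u, v}}"
    then show "{Cp i y, Cp i z'} \<in> E0 - {{Cp i p, Sub i}}"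
      using copy_edge[of y z' i] i by (auto simp: doubleton_eq_iff)
  qed
  with z show "reach (E0 - {{Cp i p, Sub i}}) (Cp i p) w"
    by simp
qed

lemma reach_copy_tree:
  assumes "a \<in> N" "z \<in> N"
    and "\<And>c d. {c, d} \<in> E \<Longrightarrow> {c, d} \<noteq> {u, v} \<Longrightarrow> {Cp i c, Cp i d} \<in> G"
    and "{Cp i u, Sub i} \<in> G" "{Sub i, Cp i v} \<in> G"
  shows "reach G (Cp i a) (Cp i z)"
proof (rule reach_map[OF tree_connected[OF assms(1,2)]])
  fix y z'
  assume e: "{y, z'} \<in> E"
  show "reach G (Cp i y) (Cp i z')"
  proof (cases "{y, z'} = {u, v}")
    case True
    have "reach G (Cp i u) (Cp i v)"
      using reach_trans[OF reach_edge reach_edge, OF assms(4,5)] .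
    with True show ?thesis
      using reach_sym by (auto simp: doubleton_eq_iff)
  next
    case False
    with e assms(3) show ?thesis
      by (blast intro: reach_edge)
  qed
qed

lemma reach_cut_centre_edge_iff:
  assumes i: "i \<in> {1, 2, 3}"
  shows "reach (E0 - {{Sub i, Ctr}}) (Sub i) w \<longleftrightarrow> w \<in> insert (Sub i) (Cp i ` N)"
proof
  assume "reach (E0 - {{Sub i, Ctr}}) (Sub i) w"
  then show "w \<in> insert (Sub i) (Cp i ` N)"
  proof (rule reach_closed)
    fix y' w'
    assume e: "{y', w'} \<in> E0 - {{Sub i, Ctr}}" and y': "y' \<in> insert (Sub i) (Cp i ` N)"
    show "w' \<in> insert (Sub i) (Cp i ` N)"
    proof (cases "y' = Sub i")
      case True
      with e subdivision_node_neighbours[of i w'] show ?thesis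
        using uv_nodes by auto
    next
      case False
      with y' obtain z where z: "y' = Cp i z" by blast
      with e have "{Cp i z, w'} \<in> E0" by simp
      then show ?thesis
        using tree_edge_nodes by (cases rule: copy_node_neighbours[THEN disjE]) auto
    qed
  qed simp
next
  assume w: "w \<in> insert (Sub i) (Cp i ` N)"
  have sub: "{Cp i u, Sub i} \<in> E0 - {{Sub i, Ctr}}" "{Sub i, Cp i v} \<in> E0 - {{Sub i, Ctr}}"
    using subdivision_edges[OF i] by (simp_all add: doubleton_eq_iff)
  have "reach (E0 - {{Sub i, Ctr}}) (Sub i) (Cp i z)" if "z \<in> N" for z
  proof (rule reach_trans)
    show "reach (E0 - {{Sub i, Ctr}}) (Sub i) (Cp i u)"
      using reach_sym[OF reach_edge[OF sub(1)]] .
    show "reach (E0 - {{Sub i, Ctr}}) (Cp i u) (Cp i z)"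
      using copy_edge[OF _ _ i] by (intro reach_copy_tree[OF uv_nodes(1) that _ sub]) auto
  qed
  with w show "reach (E0 - {{Sub i, Ctr}}) (Sub i) w"
    by auto
qed

lemma side_copy_edge:
  assumes "{a, b} \<in> E" "{a, b} \<noteq> {u, v}" "i \<in> {1, 2, 3}" "\<not> reach (E - {{a, b}}) a u"
  shows "side V E0 lab (Cp i a) (Cp i b) = part i \<inter> side V E L a b"
    and "\<not> reach (E0 - {{Cp i a, Cp i b}}) (Cp i a) (Cp i b)"
  using reach_cut_copy_edge_iff[OF assms] label_eq_iff[OF _ assms(3)] part_subset tree_bridge[OF assms(1)]
  unfolding side_def by auto

lemma side_subdivision_edge:
  assumes "{p, q} = {u, v}" "i \<in> {1, 2, 3}"
  shows "side V E0 lab (Cp i p) (Sub i) = part i \<inter> side V E L p q"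
    and "\<not> reach (E0 - {{Cp i p, Sub i}}) (Cp i p) (Sub i)"
  using reach_cut_subdivision_edge_iff[OF assms] label_eq_iff[OF _ assms(2)] part_subset assms(1)
  unfolding side_def by auto

lemma side_centre_edge:
  assumes "i \<in> {1, 2, 3}"
  shows "side V E0 lab (Sub i) Ctr = part i"
    and "\<not> reach (E0 - {{Sub i, Ctr}}) (Sub i) Ctr"
proof -
  have "lab y \<in> insert (Sub i) (Cp i ` N) \<longleftrightarrow> y \<in> part i" if "y \<in> V" for y
    using label_cases[OF that] label_eq_iff[OF that assms] leaf_label_node[OF that] by auto
  then show "side V E0 lab (Sub i) Ctr = part i"
    unfolding side_def reach_cut_centre_edge_iff[OF assms] using part_subset by auto
  show "\<not> reach (E0 - {{Sub i, Ctr}}) (Sub i) Ctr"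
    unfolding reach_cut_centre_edge_iff[OF assms] by auto
qed

lemma reach_centre_subdivision: "i \<in> {1, 2, 3} \<Longrightarrow> reach E0 Ctr (Sub i)"
  using subdivision_edges by (metis reach_edge reach_sym)

lemma reach_centre_copy:
  assumes i: "i \<in> {1, 2, 3}" and "z \<in> N"
  shows "reach E0 Ctr (Cp i z)"
proof (rule reach_trans[OF reach_trans])
  show "reach E0 Ctr (Sub i)"
    using reach_centre_subdivision[OF i] .
  show "reach E0 (Sub i) (Cp i u)"
    using subdivision_edges[OF i] by (metis reach_edge reach_sym)
  show "reach E0 (Cp i u) (Cp i z)"
    using subdivision_edges[OF i] copy_edge[OF _ _ i]
    by (intro reach_copy_tree[OF uv_nodes(1) \<open>z \<in> N\<close>]) auto
qed

lemma reach_centre_node: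
  assumes "e \<in> E0" "c \<in> e"
  shows "reach E0 Ctr c"
  using assms(1)
proof (cases rule: refined_edge_cases)
  case (copy i a b)
  with assms(2) show ?thesis
    using reach_centre_copy tree_edge_nodes by auto
qed (use assms(2) reach_centre_copy reach_centre_subdivision uv_nodes in auto)

lemma reach_centre_label: "y \<in> V \<Longrightarrow> reach E0 Ctr (lab y)"
  using label_cases reach_centre_copy leaf_label_node by metis

lemma refined_side_flip:
  assumes "{c, d} \<in> E0" "\<not> reach (E0 - {{c, d}}) c d"
  shows "\<not> reach (E0 - {{d, c}}) d c" and "side V E0 lab d c = V - side V E0 lab c d"
proof -
  show "\<not> reach (E0 - {{d, c}}) d c"
    using assms(2) reach_sym by (metis insert_commute)
  have "reach E0 c (lab y)" if "y \<in> V" for y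
    using reach_trans[OF reach_sym[OF reach_centre_node[OF assms(1)]] reach_centre_label[OF that]] by simp
  then show "side V E0 lab d c = V - side V E0 lab c d"
    using side_complement[OF assms(2)] by blast
qed

definition far_side :: "'n \<Rightarrow> 'n \<Rightarrow> 'v set" where
  "far_side a b = (if reach (E - {{a, b}}) a u then side V E L b a else side V E L a b)"

lemma far_side_subset: "far_side a b \<subseteq> V"
  unfolding far_side_def side_def by auto

lemma far_side_oriented:
  assumes "{a, b} \<in> E"
  obtains p q where "{p, q} = {a, b}" "far_side a b = side V E L p q" "\<not> reach (E - {{p, q}}) p u"
proof (cases "reach (E - {{a, b}}) a u")
  case True
  then have "\<not> reach (E - {{b, a}}) b u"
    using bridge_sides_disjoint[OF tree_bridge[OF assms]] by (simp add: insert_commute)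
  with True show thesis
    using that[of b a] unfolding far_side_def by (simp add: insert_commute)
next
  case False
  then show thesis
    using that[of a b] unfolding far_side_def by simp
qed

lemma far_side_sym:
  assumes "{a, b} \<in> E"
  shows "far_side b a = far_side a b"
proof (cases "reach (E - {{a, b}}) a u")
  case True
  then have "\<not> reach (E - {{b, a}}) b u"
    using bridge_sides_disjoint[OF tree_bridge[OF assms]] by (simp add: insert_commute)
  with True show ?thesis
    unfolding far_side_def by simp
next
  case False
  have "reach E a u"
    using tree_connected tree_edge_nodes[OF assms] uv_nodes(1) by blast
  with False have "reach (E - {{b, a}}) b u"
    using reach_bridge_cases[of E a u b] by (simp add: insert_commute)
  with False show ?thesis
    unfolding far_side_def by simp
qed

lemma far_side_cases:
  assumes "{a, b} \<in> E"
  shows "far_side a b = side V E L a b \<or> far_side a b = V - side V E L a b"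
  using side_flip[OF assms] unfolding far_side_def by simp

lemma reach_far_side_avoids_uv:
  assumes "{p, q} \<in> E" "{p, q} \<noteq> {u, v}" "\<not> reach (E - {{p, q}}) p u"
    and "reach (E - {{p, q}}) p z"
  shows "reach (E - {{u, v}}) p z"
  using assms(4)
proof (induction rule: reach_induct)
  case refl
  show ?case by simp
next
  case (step y z)
  have "y \<noteq> u" "y \<noteq> v"
    using step.hyps(1) assms(3) reach_avoiding_u_avoids_v[OF assms(2,3)] by auto
  with step.hyps(2) have "{y, z} \<in> E - {{u, v}}"
    by (auto simp: doubleton_eq_iff)
  with step.IH show ?case
    by (rule reach_step)
qed

lemma far_side_one_side:
  assumes "{a, b} \<in> E" "{a, b} \<noteq> {u, v}"
  shows "far_side a b \<subseteq> side V E L u v \<or> far_side a b \<subseteq> V - side V E L u v"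
proof -
  obtain p q where pq: "{p, q} = {a, b}" "far_side a b = side V E L p q" "\<not> reach (E - {{p, q}}) p u"
    using far_side_oriented[OF assms(1)] .
  have pqE: "{p, q} \<in> E" "{p, q} \<noteq> {u, v}"
    using assms pq(1) by simp_all
  have reach_far: "reach (E - {{u, v}}) p (L y)" if "y \<in> far_side a b" for y
    using that reach_far_side_avoids_uv[OF pqE pq(3)] unfolding pq(2) side_def by simp
  have "reach (E - {{u, v}}) u p \<or> reach (E - {{u, v}}) v p"
    using reach_bridge_cases[OF tree_connected[OF uv_nodes(1)]] tree_edge_nodes[OF pqE(1)] by blast
  then show ?thesis
  proof
    assume "reach (E - {{u, v}}) u p"
    then have "far_side a b \<subseteq> side V E L u v"
      using reach_far far_side_subset unfolding side_def by (blast intro: reach_trans)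
    then show ?thesis ..
  next
    assume "reach (E - {{u, v}}) v p"
    then have "far_side a b \<subseteq> side V E L v u"
      using reach_far far_side_subset unfolding side_def by (auto simp: insert_commute intro: reach_trans)
    then show ?thesis
      unfolding side_flip[OF uv] ..
  qed
qed

lemma refined_side_orientations:
  assumes "{x, y} \<in> E0" "\<not> reach (E0 - {{x, y}}) x y" "side V E0 lab x y = X" "X \<subseteq> V"
    and "{c, d} = {x, y}"
  shows "\<not> reach (E0 - {{c, d}}) c d" "side V E0 lab c d \<in> {X, V - X}"
proof -
  from assms(5) have "c = x \<and> d = y \<or> c = y \<and> d = x"
    by (auto simp: doubleton_eq_iff)
  then show "\<not> reach (E0 - {{c, d}}) c d" "side V E0 lab c d \<in> {X, V - X}"
    using refined_side_flip[OF assms(1,2)] assms(2-4) by auto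
qed

lemma refined_edge_side:
  assumes "{c, d} \<in> E0"
  obtains (copy) i a b where "i \<in> {1, 2, 3}" "{a, b} \<in> E" "{a, b} \<noteq> {u, v}" "{c, d} = {Cp i a, Cp i b}"
      "\<not> reach (E0 - {{c, d}}) c d"
      "side V E0 lab c d \<in> {part i \<inter> far_side a b, V - (part i \<inter> far_side a b)}"
  | (other) i X where "i \<in> {1, 2, 3}" "X \<in> {part i \<inter> side V E L u v, part i \<inter> side V E L v u, part i}"
      "\<not> reach (E0 - {{c, d}}) c d" "side V E0 lab c d \<in> {X, V - X}"
  using assms
proof (cases rule: refined_edge_cases)
  case (copy i a b)
  obtain p q where pq: "{p, q} = {a, b}" "far_side a b = side V E L p q" "\<not> reach (E - {{p, q}}) p u"
    using far_side_oriented[OF copy(2)] .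
  with copy have pqE: "{p, q} \<in> E" "{p, q} \<noteq> {u, v}"
    by simp_all
  have cd: "{c, d} = {Cp i p, Cp i q}"
    using copy(4) pq(1) by (metis image_empty image_insert)
  have "side V E0 lab (Cp i p) (Cp i q) = part i \<inter> far_side a b"
    using side_copy_edge(1)[OF pqE copy(1) pq(3)] pq(2) by simp
  note sides = refined_side_orientations[OF copy_edge[OF pqE copy(1)]
      side_copy_edge(2)[OF pqE copy(1) pq(3)] this _ cd]
  show thesis
    using that(1)[OF copy(1-4) sides] part_subset by blast
next
  case (to_u i)
  have "part i \<inter> side V E L u v \<subseteq> V"
    using part_subset by blast
  note sides = refined_side_orientations[OF conjunct1[OF subdivision_edges[OF to_u(1)]]
      side_subdivision_edge(2,1)[OF refl to_u(1)] this to_u(2)]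
  show thesis
    using that(2)[OF to_u(1) _ sides] by blast
next
  case (to_v i)
  have vu: "{v, u} = {u, v}" and cd: "{c, d} = {Cp i v, Sub i}" and e: "{Cp i v, Sub i} \<in> E0"
    using to_v subdivision_edges[OF to_v(1)] by (simp_all add: insert_commute)
  have "part i \<inter> side V E L v u \<subseteq> V"
    using part_subset by blast
  note sides = refined_side_orientations[OF e side_subdivision_edge(2,1)[OF vu to_v(1)] this cd]
  show thesis
    using that(2)[OF to_v(1) _ sides] by blast
next
  case (to_centre i)
  note sides = refined_side_orientations[OF conjunct2[OF conjunct2[OF subdivision_edges[OF to_centre(1)]]]
      side_centre_edge(2,1)[OF to_centre(1)] part_subset to_centre(2)]
  show thesis
    using that(2)[OF to_centre(1) _ sides] by blast
qed

lemma refined_edge_bridge: "{c, d} \<in> E0 \<Longrightarrow> \<not> reach (E0 - {{c, d}}) c d"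
  by (cases rule: refined_edge_side)

lemma refined_edge_proper:
  assumes "e \<in> E0"
  shows "\<exists>c d. c \<noteq> d \<and> e = {c, d}"
  using assms
proof (cases rule: refined_edge_cases)
  case (copy i a b)
  then show ?thesis
    using tree_edge_ne[OF copy(2)] by (intro exI[of _ "Cp i a"] exI[of _ "Cp i b"]) simp
next
  case (to_u i)
  then show ?thesis
    by (intro exI[of _ "Cp i u"] exI[of _ "Sub i"]) simp
next
  case (to_v i)
  then show ?thesis
    by (intro exI[of _ "Sub i"] exI[of _ "Cp i v"]) simp
next
  case (to_centre i)
  then show ?thesis
    by (intro exI[of _ "Sub i"] exI[of _ "Ctr"]) simp
qed

lemma refined_edges_finite: "finite E0"
proof (rule finite_subset)
  show "E0 \<subseteq> Pow (ref_nodes N)"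
  proof
    fix e
    assume "e \<in> E0"
    then show "e \<in> Pow (ref_nodes N)"
      by (cases rule: refined_edge_cases) (use tree_edge_nodes uv_nodes in \<open>auto simp: ref_nodes_def\<close>)
  qed
  have "{Cp i x | i x. i \<in> {1, 2, 3} \<and> x \<in> N} = (\<lambda>(i, x). Cp i x) ` ({1, 2, 3} \<times> N)"
    by auto
  then show "finite (Pow (ref_nodes N))"
    using tree_nodes_finite by (simp add: ref_nodes_def)
qed

lemma leaf_edge:
  assumes "y \<in> V"
  obtains m where "{L y, m} \<in> E" "\<forall>e\<in>E. L y \<in> e \<longrightarrow> e = {L y, m}"
proof -
  obtain el where el: "{e\<in>E. L y \<in> e} = {el}"
    using leaf_label_deg[OF assms] unfolding deg_def by (auto simp: card_1_singleton_iff)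
  then have "el \<in> E" "L y \<in> el"
    by auto
  then obtain c d where "el = {c, d}"
    using tree_edge[of el] by (auto simp: card_2_iff)
  define m where "m = (if L y = c then d else c)"
  have "el = {L y, m}"
    using \<open>el = {c, d}\<close> \<open>L y \<in> el\<close> unfolding m_def by (auto simp: doubleton_eq_iff)
  with el \<open>el \<in> E\<close> show thesis
    using that by blast
qed

lemma copy_leaf_neighbour:
  assumes "{l, m} \<in> E" "\<forall>e\<in>E. l \<in> e \<longrightarrow> e = {l, m}" "{Cp i l, w} \<in> E0"
  shows "w = (if l \<in> {u, v} then Sub i else Cp i m)"
  using copy_node_neighbours[OF assms(3)]
proof
  assume "\<exists>z'. w = Cp i z' \<and> {l, z'} \<in> E \<and> {l, z'} \<noteq> {u, v}"
  then obtain z' where z': "w = Cp i z'" "{l, z'} \<in> E" "{l, z'} \<noteq> {u, v}"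
    by blast
  then have lz': "{l, z'} = {l, m}"
    using bspec[OF assms(2) z'(2)] by simp
  then have "z' = m"
    by (auto simp: doubleton_eq_iff)
  moreover have "l \<notin> {u, v}"
  proof
    assume "l \<in> {u, v}"
    then have "{u, v} = {l, m}"
      using bspec[OF assms(2) uv] by simp
    with lz' z'(3) show False
      by simp
  qed
  ultimately show ?thesis
    using z'(1) by simp
qed simp

lemma label_on_unique_edge:
  assumes y: "y \<in> V" and e: "e1 \<in> E0" "e2 \<in> E0" "lab y \<in> e1" "lab y \<in> e2"
  shows "e1 = e2"
proof -
  obtain i where i: "i \<in> {1, 2, 3}" "lab y = Cp i (L y)"
    using label_cases[OF y] by blast
  obtain m where m: "{L y, m} \<in> E" "\<forall>e\<in>E. L y \<in> e \<longrightarrow> e = {L y, m}"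
    using leaf_edge[OF y] by blast
  have unique: "e = {Cp i (L y), if L y \<in> {u, v} then Sub i else Cp i m}"
    if e: "e \<in> E0" "Cp i (L y) \<in> e" for e
  proof -
    obtain c d where "c \<noteq> d" "e = {c, d}"
      using refined_edge_proper[OF e(1)] by blast
    with e(2) obtain w where "e = {Cp i (L y), w}"
      by auto
    with e(1) copy_leaf_neighbour[OF m] show ?thesis
      by simp
  qed
  from e i show ?thesis
    using unique[OF e(1)] unique[OF e(2)] by simp
qed

lemma refined_labelled_forest:
  assumes "y1 \<in> V" "y2 \<in> V"
  shows "labelled_forest (lab ` V) (lab y1) (lab y2) E0"
proof (rule labelled_forestI)
  show "reach E0 (lab y1) (lab y2)"
    using reach_trans[OF reach_sym[OF reach_centre_label[OF assms(1)]] reach_centre_label[OF assms(2)]] .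
next
  fix z e1 e2
  assume "z \<in> lab ` V" "e1 \<in> E0" "e2 \<in> E0" "z \<in> e1" "z \<in> e2"
  then show "e1 = e2"
    using label_on_unique_edge by blast
qed (use assms refined_edges_finite refined_edge_proper refined_edge_bridge in auto)

end

section \<open>Widths in the refined tree\<close>

definition base_edge :: "'n rnode set \<Rightarrow> 'n set" where
  "base_edge e = {z. \<exists>i. Cp i z \<in> e}"

lemma base_edge_copy [simp]: "base_edge {Cp i a, Cp i b} = {a, b}"
  unfolding base_edge_def by auto

locale minimal_refinement = refined_tree +
  fixes f :: "'a set \<Rightarrow> nat" and k :: nat
  assumes cf: "connectivity_function V f"
    and minimal: "minimal_improvement V f (side V E L u v) C1 C2 C3"
    and width: "dwidth V f E L = k"
    and uv_width: "f (side V E L u v) = k"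
begin

lemma part_small:
  assumes "i \<in> {1, 2, 3}"
  shows "2 * f (part i) < k" "f (part i \<inter> side V E L u v) < k" "f (part i \<inter> side V E L v u) < k"
  using minimal assms side_flip[OF uv] uv_width
  unfolding minimal_improvement_def improvement_def part_def by auto

lemma tree_edge_width:
  assumes "{a, b} \<in> E"
  shows "f (side V E L a b) \<le> k"
proof -
  have "edge_widths V f E L \<subseteq> (\<lambda>(a, b). f (side V E L a b)) ` (N \<times> N)"
    unfolding edge_widths_def using tree_edge_nodes by fastforce
  then have "finite (edge_widths V f E L)"
    using tree_nodes_finite finite_subset by blast
  moreover have "f (side V E L a b) \<in> edge_widths V f E L"
    unfolding edge_widths_def using assms by blast
  ultimately show ?thesis
    using width unfolding dwidth_def by (metis Max_ge)
qed

lemma far_side_width: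
  assumes "{a, b} \<in> E"
  shows "f (far_side a b) = f (side V E L a b)"
  using far_side_cases[OF assms] cf_complement[OF cf side_subset] by auto

lemma part_far_side_width:
  assumes "{a, b} \<in> E" "{a, b} \<noteq> {u, v}" "i \<in> {1, 2, 3}"
  shows "f (part i \<inter> far_side a b) \<le> f (far_side a b)"
proof -
  have "f (far_side a b \<inter> C1) \<le> f (far_side a b)" "f (far_side a b \<inter> C2) \<le> f (far_side a b)"
    "f (far_side a b \<inter> C3) \<le> f (far_side a b)"
    using minimal_improvement_restrict[OF cf side_subset minimal far_side_one_side[OF assms(1,2)]] .
  with assms(3) show ?thesis
    unfolding part_def by (auto simp: Int_commute)
qed

lemma refined_edge_width:
  assumes "{c, d} \<in> E0"
  shows "f (side V E0 lab c d) \<le> k"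
    and "f (side V E0 lab c d) = k \<Longrightarrow> \<exists>i a b. i \<in> {1, 2, 3} \<and> {a, b} \<in> E \<and> {a, b} \<noteq> {u, v}
      \<and> {c, d} = {Cp i a, Cp i b} \<and> f (part i \<inter> far_side a b) = k"
proof -
  have complement: "f S = f X" if "S \<in> {X, V - X}" "X \<subseteq> V" for S X
    using that cf_complement[OF cf] by auto
  have cases: "f (side V E0 lab c d) < k \<or> (\<exists>i a b. i \<in> {1, 2, 3} \<and> {a, b} \<in> E \<and> {a, b} \<noteq> {u, v}
      \<and> {c, d} = {Cp i a, Cp i b} \<and> f (side V E0 lab c d) = f (part i \<inter> far_side a b))"
    using assms
  proof (cases rule: refined_edge_side)
    case (copy i a b)
    have "part i \<inter> far_side a b \<subseteq> V"
      using far_side_subset by blast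
    with copy complement[OF copy(6)] show ?thesis
      by blast
  next
    case (other i X)
    then have "X = part i \<inter> side V E L u v \<or> X = part i \<inter> side V E L v u \<or> X = part i"
      by simp
    then have "f X < k" "X \<subseteq> V"
      using part_small[OF other(1)] part_subset by auto
    with complement[OF other(4)] show ?thesis
      by simp
  qed
  then show "f (side V E0 lab c d) \<le> k"
  proof (elim disjE exE conjE)
    fix i a b
    assume "i \<in> {1, 2, 3}" "{a, b} \<in> E" "{a, b} \<noteq> {u, v}"
      and "f (side V E0 lab c d) = f (part i \<inter> far_side a b)"
    then show ?thesis
      using part_far_side_width[of a b i] far_side_width[of a b] tree_edge_width[of a b] by simp
  qed simp
  show "\<exists>i a b. i \<in> {1, 2, 3} \<and> {a, b} \<in> E \<and> {a, b} \<noteq> {u, v}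
      \<and> {c, d} = {Cp i a, Cp i b} \<and> f (part i \<inter> far_side a b) = k"
    if "f (side V E0 lab c d) = k"
    using cases
  proof (elim disjE exE conjE)
    fix i a b
    assume "i \<in> {1, 2, 3}" "{a, b} \<in> E" "{a, b} \<noteq> {u, v}" "{c, d} = {Cp i a, Cp i b}"
      and "f (side V E0 lab c d) = f (part i \<inter> far_side a b)"
    with that show ?thesis
      by (intro exI[of _ i] exI[of _ a] exI[of _ b]) simp
  qed (use that in simp)
qed

lemma refined_widths_bounded: "edge_widths V f E0 lab \<subseteq> {..k}"
  unfolding edge_widths_def using refined_edge_width(1) by blast

lemma critical_refined_edge:
  assumes "e \<in> edges_of_width V f E0 lab k"
  obtains i a b where "i \<in> {1, 2, 3}" "{a, b} \<in> E" "{a, b} \<noteq> {u, v}" "e = {Cp i a, Cp i b}"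
    "f (part i \<inter> far_side a b) = k" "f (far_side a b) = k"
proof -
  from assms obtain c d where cd: "e \<in> E0" "e = {c, d}" "f (side V E0 lab c d) = k"
    unfolding edges_of_width_def by blast
  then obtain i a b where ab: "i \<in> {1, 2, 3}" "{a, b} \<in> E" "{a, b} \<noteq> {u, v}" "e = {Cp i a, Cp i b}"
      "f (part i \<inter> far_side a b) = k"
    using refined_edge_width(2)[of c d] by blast
  moreover have "f (far_side a b) = k"
    using part_far_side_width[OF ab(2,3,1)] far_side_width[OF ab(2)] tree_edge_width[OF ab(2)] ab(5)
    by simp
  ultimately show thesis
    using that by blast
qed

text \<open>By minimality of the improvement, f X \<le> f (X \<inter> C) for every part C of a far side X;
  if this held with equality k for two disjoint parts, submodularity would force f X < k.\<close>

lemma critical_copy_unique: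
  assumes "{a, b} \<in> E" "{a, b} \<noteq> {u, v}" "i \<in> {1, 2, 3}" "j \<in> {1, 2, 3}"
    and "f (part i \<inter> far_side a b) = k" "f (part j \<inter> far_side a b) = k" "f (far_side a b) = k"
  shows "i = j"
proof (rule ccontr)
  let ?X = "far_side a b"
  assume "i \<noteq> j"
  have "f ?X < k"
  proof (rule cut_lt_of_le_restrictions[OF cf far_side_subset part_subset part_subset
        parts_disjoint[OF assms(3,4) \<open>i \<noteq> j\<close>]])
    show "2 * f (part i) < k" "2 * f (part j) < k"
      using part_small assms(3,4) by blast+
    show "f ?X \<le> f (?X \<inter> part i)" "f ?X \<le> f (?X \<inter> part j)"
      using assms(5-7) by (simp_all add: Int_commute)
  qed
  with assms(7) show False
    by simp
qed

lemma refined_critical_edges_fewer: "n_width_edges V f E0 lab k < n_width_edges V f E L k"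
proof -
  let ?S0 = "edges_of_width V f E0 lab k" and ?ST = "edges_of_width V f E L k"
  have "base_edge ` ?S0 \<subseteq> ?ST - {{u, v}}"
  proof
    fix x
    assume "x \<in> base_edge ` ?S0"
    then obtain e where e: "e \<in> ?S0" "x = base_edge e"
      by blast
    then obtain i a b where "{a, b} \<in> E" "{a, b} \<noteq> {u, v}" "x = {a, b}" "f (far_side a b) = k"
      by (elim critical_refined_edge) simp
    then show "x \<in> ?ST - {{u, v}}"
      using far_side_width unfolding edges_of_width_def by auto
  qed
  moreover have "inj_on base_edge ?S0"
  proof (rule inj_onI)
    fix e1 e2
    assume "e1 \<in> ?S0" "e2 \<in> ?S0" and same_base: "base_edge e1 = base_edge e2"
    obtain i a b where e1: "i \<in> {1, 2, 3}" "{a, b} \<in> E" "{a, b} \<noteq> {u, v}" "e1 = {Cp i a, Cp i b}"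
        "f (part i \<inter> far_side a b) = k" "f (far_side a b) = k"
      by (rule critical_refined_edge[OF \<open>e1 \<in> ?S0\<close>])
    obtain j c d where e2: "j \<in> {1, 2, 3}" "{c, d} \<in> E" "{c, d} \<noteq> {u, v}" "e2 = {Cp j c, Cp j d}"
        "f (part j \<inter> far_side c d) = k" "f (far_side c d) = k"
      by (rule critical_refined_edge[OF \<open>e2 \<in> ?S0\<close>])
    have "{c, d} = {a, b}"
      using same_base e1(4) e2(4) by simp
    moreover from this have "c = a \<and> d = b \<or> c = b \<and> d = a"
      by (simp add: doubleton_eq_iff)
    then have "far_side c d = far_side a b"
      using far_side_sym[OF e1(2)] by (elim disjE) simp_all
    with e2(5) have "i = j"
      using critical_copy_unique[OF e1(2,3,1) e2(1) e1(5) _ e1(6)] by simp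
    ultimately show "e1 = e2"
      using e1(4) e2(4) by (metis image_empty image_insert)
  qed
  moreover have "finite ?ST" "{u, v} \<in> ?ST"
    unfolding edges_of_width_def using tree_edges_finite uv uv_width by auto
  ultimately have "card ?S0 < card ?ST"
    by (metis card_Diff1_less card_image card_mono finite_Diff le_less_trans)
  then show ?thesis
    unfolding n_width_edges_eq_card .
qed

lemma labels_on_both_sides:
  obtains y1 y2 where "y1 \<in> V" "y2 \<in> V" "y1 \<in> side V E L u v" "y2 \<notin> side V E L u v"
proof -
  have "0 < k"
    using part_small(1)[of 1] by simp
  moreover have "f (V - side V E L u v) = k"
    using uv_width cf_complement[OF cf side_subset, of E L u v] by simp
  ultimately have "side V E L u v \<noteq> {}" "V - side V E L u v \<noteq> {}"
    using uv_width cf_empty[OF cf] by (metis less_irrefl)+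
  then show thesis
    using that side_subset[of V E L u v] by blast
qed

lemma refinement_improves:
  assumes "is_refinement V N E L u v C1 C2 C3 N' E'"
  shows "dwidth V f E' lab \<le> k" and "n_width_edges V f E' lab k < n_width_edges V f E L k"
proof -
  have steps: "(cleanup_step (lab ` V))\<^sup>*\<^sup>* (ref_nodes N, E0) (N', E')"
    using assms unfolding is_refinement_def Let_def by blast
  obtain y1 y2 where y: "y1 \<in> V" "y2 \<in> V" "y1 \<in> side V E L u v" "y2 \<notin> side V E L u v"
    using labels_on_both_sides .
  then have "lab y1 \<noteq> lab y2"
    using label_inj unfolding inj_on_def by blast
  with steps refined_labelled_forest[OF y(1,2)] show "dwidth V f E' lab \<le> k"
    using refined_widths_bounded by (rule cleanup_width_le)
  show "n_width_edges V f E' lab k < n_width_edges V f E L k"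
    using cleanup_steps_preserve[OF steps refined_labelled_forest[OF y(1,2)]] refined_critical_edges_fewer
    by (meson le_less_trans)
qed

end


theorem theorem4:
  fixes V :: "'v set" and f :: "'v set \<Rightarrow> nat"
    and N :: "'n set" and E :: "'n set set" and L :: "'v \<Rightarrow> 'n"
    and k h :: nat and u v :: 'n and W :: "'v set"
  assumes "connectivity_function V f"
    and "branch_decomposition V N E L"
    and "dwidth V f E L = k"
    and "n_width_edges V f E L k = h" and "h \<ge> 1"
    and "{u, v} \<in> E" and "f (side V E L u v) = k"
    and "W = side V E L u v"
    and "\<exists>C1 C2 C3. improvement V f W C1 C2 C3"
  shows "\<exists>C1 C2 C3. improvement V f W C1 C2 C3 \<and>
           (\<forall>N' E'. is_refinement V N E L u v C1 C2 C3 N' E' \<longrightarrow>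
              dwidth V f E' (ref_label L C1 C2) \<le> k
              \<and> n_width_edges V f E' (ref_label L C1 C2) k < h)"
proof -
  obtain C1 C2 C3 where minimal: "minimal_improvement V f W C1 C2 C3"
    using exists_minimal_improvement assms(9) by blast
  then have improvement: "improvement V f W C1 C2 C3"
    unfolding minimal_improvement_def by blast
  interpret minimal_refinement V N E L u v C1 C2 C3 f k
  proof
    show "C1 \<inter> C2 = {}" "C1 \<inter> C3 = {}" "C2 \<inter> C3 = {}" "C1 \<union> C2 \<union> C3 = V"
      using improvement unfolding improvement_def by blast+
  qed (use assms minimal in auto)
  show ?thesis
    using improvement refinement_improves assms(4) by blast
qed

end
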